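(* There is a constant $C$, independent of $x,y,\xi$, such that for real $\xi\notin\{\pm k_1,\pm k_2,\pm\xi_1,\dots,\pm\xi_N\}$ and $y<x$ the following hold. (a) If $|\xi|>k_2$: $|R_{\xi,0^+}(x,y)|\le C(1+|\xi|)^{-1}e^{-\tilde B|x-y|}$ when $y<x<-d$, or $d<y<x$, or $y<-d<d<x$; and $|R_{\xi,0^+}(x,y)|\le C(1+|\xi|)^{-1}e^{-\tilde A|x-y|}$ in all other cases with $y<x$. (b) If $k_1<|\xi|<k_2$: $|R_{\xi,0^+}(x,y)|\le C\dfrac{e^{-\tilde B|x-y|}}{\sqrt{|\xi^2-k_1^2|}\prod_{n=1}^N|\xi^2-\xi_n^2|}$. (c) If $|\xi|<k_1$: $|R_{\xi,0^+}(x,y)|\le \dfrac{C}{\sqrt{|\xi^2-k_1^2|}}$. The analogous estimates hold for $x<y$ (with the roles of $x$ and $y$ interchanged).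
   Context: Let $0<k_1<k_2$, $d>0$, $q(x)=(k_2^2-k_1^2)\chi_{[-d,d]}(x)$, and $\tilde A=\sqrt{\xi^2-k_2^2}$, $\tilde B=\sqrt{\xi^2-k_1^2}$. Principal square root on $\mathbb{C}\setminus(-\infty,0]$. For $\xi\in\mathbb{R}$, $u_\pm(\xi,0^+;\cdot)$ are the solutions of $u''+(k_1^2+q(x)-\xi^2)u=0$ (with $u,u'$ continuous) with $u_\pm(\xi,0^+;x)=e^{\pm ix\sqrt{k_1^2-\xi^2}}$ for $\pm x>d$, where $\sqrt{k_1^2-\xi^2}:=i\sqrt{\xi^2-k_1^2}$ for $|\xi|>k_1$ (the $\delta\to0^+$ limit of $\sqrt{k_1^2-\xi^2+i\delta}$). $W(\xi,0^+)=u_-\partial_xu_+-u_+\partial_xu_-$ is their Wronskian. $\xi_1,\dots,\xi_N$ are the zeros of $W(\cdot,0^+)$ in $(k_1,k_2)$. The outgoing resolvent kernel of $\partial_x^2+k_1^2+q(x)-\xi^2$ is $R_{\xi,0^+}(x,y)=u_+(\xi,0^+;x)u_-(\xi,0^+;y)/W(\xi,0^+)$ for $y<x$ and $R_{\xi,0^+}(x,y)=u_-(\xi,0^+;x)u_+(\xi,0^+;y)/W(\xi,0^+)$ for $x<y$. *)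

theory Defs
  imports "HOL-Analysis.Analysis"
begin

definition qpot :: "real \<Rightarrow> real \<Rightarrow> real \<Rightarrow> real \<Rightarrow> real" where
  "qpot k1 k2 d x = (if x \<in> {-d..d} then k2\<^sup>2 - k1\<^sup>2 else 0)"

definition kappa :: "real \<Rightarrow> real \<Rightarrow> complex" where
  "kappa k1 \<xi> = (if \<bar>\<xi>\<bar> \<le> k1 then complex_of_real (sqrt (k1\<^sup>2 - \<xi>\<^sup>2))
                   else \<i> * complex_of_real (sqrt (\<xi>\<^sup>2 - k1\<^sup>2)))"

definition is_sol :: "real \<Rightarrow> real \<Rightarrow> real \<Rightarrow> real \<Rightarrow> (real \<Rightarrow> complex) \<Rightarrow> bool" where
  "is_sol k1 k2 d \<xi> u \<longleftrightarrow>
     (\<exists>u'. continuous_on UNIV u' \<and>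
        (\<forall>x. (u has_vector_derivative u' x) (at x)) \<and>
        (\<forall>x. x \<noteq> d \<and> x \<noteq> -d \<longrightarrow>
           (u' has_vector_derivative
              (complex_of_real (\<xi>\<^sup>2 - k1\<^sup>2 - qpot k1 k2 d x) * u x)) (at x)))"

definition u_plus :: "real \<Rightarrow> real \<Rightarrow> real \<Rightarrow> real \<Rightarrow> real \<Rightarrow> complex" where
  "u_plus k1 k2 d \<xi> = (THE u. is_sol k1 k2 d \<xi> u \<and>
      (\<forall>x. x > d \<longrightarrow> u x = exp (\<i> * complex_of_real x * kappa k1 \<xi>)))"

definition u_minus :: "real \<Rightarrow> real \<Rightarrow> real \<Rightarrow> real \<Rightarrow> real \<Rightarrow> complex" where
  "u_minus k1 k2 d \<xi> = (THE u. is_sol k1 k2 d \<xi> u \<and>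
      (\<forall>x. x < -d \<longrightarrow> u x = exp (- \<i> * complex_of_real x * kappa k1 \<xi>)))"

text \<open>Wronskian u_- u_+' - u_+ u_-' (independent of x; evaluated at x = 0).\<close>
definition wronsk :: "real \<Rightarrow> real \<Rightarrow> real \<Rightarrow> real \<Rightarrow> complex" where
  "wronsk k1 k2 d \<xi> =
     u_minus k1 k2 d \<xi> 0 * vector_derivative (u_plus k1 k2 d \<xi>) (at 0)
   - u_plus k1 k2 d \<xi> 0 * vector_derivative (u_minus k1 k2 d \<xi>) (at 0)"

definition wzeros :: "real \<Rightarrow> real \<Rightarrow> real \<Rightarrow> real set" where
  "wzeros k1 k2 d = {\<zeta>. k1 < \<zeta> \<and> \<zeta> < k2 \<and> wronsk k1 k2 d \<zeta> = 0}"

definition resolv :: "real \<Rightarrow> real \<Rightarrow> real \<Rightarrow> real \<Rightarrow> real \<Rightarrow> real \<Rightarrow> complex" where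
  "resolv k1 k2 d \<xi> x y =
     (if y < x then u_plus k1 k2 d \<xi> x * u_minus k1 k2 d \<xi> y / wronsk k1 k2 d \<xi>
      else u_minus k1 k2 d \<xi> x * u_plus k1 k2 d \<xi> y / wronsk k1 k2 d \<xi>)"

end

theory Submission
  imports Defs
begin

text \<open>Because \<open>q\<close> is even and piecewise constant, \<open>u\<^sub>+\<close> is explicit: the plane wave \<open>e\<^sup>i\<^sup>\<kappa>\<^sup>x\<close> right of
  the well (\<open>\<kappa> = \<surd>(k\<^sub>1\<^sup>2 - \<xi>\<^sup>2)\<close>), a combination of \<open>cos (\<mu> x)\<close> and \<open>sin (\<mu> x)\<close> inside it
  (\<open>\<mu> = \<surd>(k\<^sub>2\<^sup>2 - \<xi>\<^sup>2)\<close>), and again a solution of frequency \<open>\<kappa>\<close> left of it.  Moreover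
  \<open>u\<^sub>-(x) = u\<^sub>+(-x)\<close> and \<open>W = 2 u\<^sub>+(0) u\<^sub>+'(0)\<close>, so \<open>\<bar>R(x,y)\<bar> = \<bar>u\<^sub>+(b)\<bar> \<bar>u\<^sub>+(-a)\<bar> / \<bar>W\<bar>\<close> with
  \<open>a = min x y\<close>, \<open>b = max x y\<close>, and each regime becomes an explicit estimate.

  For \<open>\<bar>\<xi>\<bar> < k\<^sub>1\<close> all solutions are bounded oscillations and \<open>\<bar>W\<bar> \<ge> 2\<kappa>\<close>.  For \<open>\<bar>\<xi>\<bar> > k\<^sub>1\<close>
  we have \<open>\<kappa> = i B\<close>: right of the well \<open>u\<^sub>+ = e\<^sup>-\<^sup>B\<^sup>x\<close>, and left of it the coefficient of the
  exponential growing towards \<open>-\<infinity>\<close> is proportional to \<open>W\<close>, so \<open>\<bar>u\<^sub>+(b) u\<^sub>+(-a)\<bar> / \<bar>W\<bar>\<close> decays like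
  \<open>e\<^sup>-\<^sup>B\<^sup>(\<^sup>b\<^sup>-\<^sup>a\<^sup>)\<close> as long as neither point lies in the well.  For \<open>\<bar>\<xi>\<bar> > k\<^sub>2\<close> also \<open>\<mu> = i A\<close> and
  \<open>\<bar>W\<bar> \<ge> B e\<^sup>-\<^sup>2\<^sup>(\<^sup>B\<^sup>-\<^sup>A\<^sup>)\<^sup>d\<close>.  For \<open>k\<^sub>1 < \<bar>\<xi>\<bar> < k\<^sub>2\<close> the Wronskian is \<open>2 e\<^sup>-\<^sup>2\<^sup>B\<^sup>d T(B)\<close> for a
  real function \<open>T\<close> whose zeros (the bound states \<open>\<xi>\<^sub>n\<close>) are all simple, hence finitely many, and
  \<open>\<bar>T(B)\<bar>\<close> is bounded below by a multiple of \<open>B \<Prod>\<^sub>n \<bar>\<xi>\<^sup>2 - \<xi>\<^sub>n\<^sup>2\<bar>\<close>.\<close>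

section \<open>Solutions of \<open>w'' = -\<nu>\<^sup>2 w\<close>\<close>

definition trig_sol :: "complex \<Rightarrow> real \<Rightarrow> complex \<Rightarrow> complex \<Rightarrow> real \<Rightarrow> complex" where
  "trig_sol \<nu> p a b t = a * cos (\<nu> * of_real (t - p)) + b * (sin (\<nu> * of_real (t - p)) / \<nu>)"

definition trig_sol_deriv :: "complex \<Rightarrow> real \<Rightarrow> complex \<Rightarrow> complex \<Rightarrow> real \<Rightarrow> complex" where
  "trig_sol_deriv \<nu> p a b t = b * cos (\<nu> * of_real (t - p)) - a * \<nu> * sin (\<nu> * of_real (t - p))"

lemma trig_sol_base [simp]: "trig_sol \<nu> p a b p = a"
  by (simp add: trig_sol_def)

lemma trig_sol_deriv_base [simp]: "trig_sol_deriv \<nu> p a b p = b"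
  by (simp add: trig_sol_deriv_def)

lemma has_vector_derivative_trig_sol:
  assumes "\<nu> \<noteq> 0"
  shows "(trig_sol \<nu> p a b has_vector_derivative trig_sol_deriv \<nu> p a b t) (at t within S)"
proof -
  have "((\<lambda>z. a * cos (\<nu> * (z - of_real p)) + b * (sin (\<nu> * (z - of_real p)) / \<nu>))
          has_field_derivative trig_sol_deriv \<nu> p a b t) (at (of_real t))"
    unfolding trig_sol_deriv_def using assms
    by (auto intro!: derivative_eq_intros simp: field_simps)
  from has_vector_derivative_real_field[OF this, of S]
  show ?thesis unfolding trig_sol_def by simp
qed

lemma has_vector_derivative_trig_sol_deriv:
  "(trig_sol_deriv \<nu> p a b has_vector_derivative (- \<nu>\<^sup>2) * trig_sol \<nu> p a b t) (at t within S)"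
proof (cases "\<nu> = 0")
  case True
  then show ?thesis unfolding trig_sol_deriv_def trig_sol_def by simp
next
  case False
  have "((\<lambda>z. b * cos (\<nu> * (z - of_real p)) - a * \<nu> * sin (\<nu> * (z - of_real p)))
          has_field_derivative (- \<nu>\<^sup>2) * trig_sol \<nu> p a b t) (at (of_real t))"
    unfolding trig_sol_def using False
    by (auto intro!: derivative_eq_intros simp: field_simps power2_eq_square)
  from has_vector_derivative_real_field[OF this, of S]
  show ?thesis unfolding trig_sol_deriv_def by simp
qed

lemma continuous_on_trig_sol: "\<nu> \<noteq> 0 \<Longrightarrow> continuous_on S (trig_sol \<nu> p a b)"
  by (rule continuous_on_vector_derivative, rule has_vector_derivative_trig_sol)

lemma continuous_on_trig_sol_deriv: "continuous_on S (trig_sol_deriv \<nu> p a b)"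
  by (rule continuous_on_vector_derivative, rule has_vector_derivative_trig_sol_deriv)

text \<open>For every solution \<open>g\<close> of the same equation, \<open>w g' - w' g\<close> is constant, hence zero; taking
  for \<open>g\<close> the cosine and the sine solution based at \<open>p\<close> yields two linear equations forcing \<open>w t = 0\<close>.\<close>
lemma trig_ode_zero_data_imp_zero:
  fixes w w' :: "real \<Rightarrow> complex"
  assumes nz: "\<nu> \<noteq> 0" and I: "convex I" and K: "finite K" and p: "p \<in> I"
    and cw: "continuous_on I w" and cw': "continuous_on I w'"
    and dw: "\<And>t. t \<in> I \<Longrightarrow> (w has_vector_derivative w' t) (at t)"
    and dw': "\<And>t. t \<in> I - K \<Longrightarrow> (w' has_vector_derivative (- \<nu>\<^sup>2) * w t) (at t)"
    and w0: "w p = 0" and w'0: "w' p = 0"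
    and t: "t \<in> I"
  shows "w t = 0"
proof -
  have const: "w t * trig_sol_deriv \<nu> p a0 b0 t - w' t * trig_sol \<nu> p a0 b0 t = 0" for a0 b0
  proof (rule has_derivative_zero_unique_strong_convex[OF I K, of _ p])
    show "continuous_on I (\<lambda>t. w t * trig_sol_deriv \<nu> p a0 b0 t - w' t * trig_sol \<nu> p a0 b0 t)"
      by (intro continuous_intros cw cw' continuous_on_trig_sol_deriv continuous_on_trig_sol[OF nz])
    fix x assume x: "x \<in> I - K"
    have "(w has_vector_derivative w' x) (at x within I)" "(w' has_vector_derivative (- \<nu>\<^sup>2) * w x) (at x within I)"
      using x dw dw' by (auto intro: has_vector_derivative_at_within)
    from has_vector_derivative_diff[OF
        has_vector_derivative_mult[OF this(1) has_vector_derivative_trig_sol_deriv[of \<nu> p a0 b0]]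
        has_vector_derivative_mult[OF this(2) has_vector_derivative_trig_sol[OF nz, of p a0 b0]]]
    have "((\<lambda>t. w t * trig_sol_deriv \<nu> p a0 b0 t - w' t * trig_sol \<nu> p a0 b0 t) has_vector_derivative 0) (at x within I)"
      by (simp add: algebra_simps)
    then show "((\<lambda>t. w t * trig_sol_deriv \<nu> p a0 b0 t - w' t * trig_sol \<nu> p a0 b0 t) has_derivative (\<lambda>h. 0)) (at x within I)"
      by (simp add: has_vector_derivative_def)
  qed (use t p w0 w'0 in auto)
  define c where "c = cos (\<nu> * of_real (t - p))"
  define s where "s = sin (\<nu> * of_real (t - p))"
  have e1: "w t * (- \<nu> * s) - w' t * c = 0"
    using const[of 1 0] unfolding trig_sol_deriv_def trig_sol_def c_def s_def by simp
  have e2: "w t * c - w' t * (s / \<nu>) = 0"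
    using const[of 0 1] unfolding trig_sol_deriv_def trig_sol_def c_def s_def by simp
  have "w t * (s\<^sup>2 + c\<^sup>2) = - (s / \<nu>) * (w t * (- \<nu> * s) - w' t * c) + c * (w t * c - w' t * (s / \<nu>))"
    using nz by (simp add: field_simps power2_eq_square)
  then have "w t * (s\<^sup>2 + c\<^sup>2) = 0" using e1 e2 by simp
  then show ?thesis unfolding s_def c_def by (simp add: sin_cos_squared_add)
qed

lemma has_vector_derivative_glue:
  fixes g h :: "real \<Rightarrow> complex"
  assumes "\<And>t. (g has_vector_derivative g' t) (at t)" "\<And>t. (h has_vector_derivative h' t) (at t)"
    and "g p = h p" "g' p = h' p"
  shows "((\<lambda>t. if t \<le> p then g t else h t) has_vector_derivative (if t \<le> p then g' t else h' t)) (at t)"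
proof -
  have "closure {..p} \<inter> closure {p<..} = {p}" by auto
  then have "((\<lambda>t. if t \<in> {..p} then g t else h t) has_vector_derivative
      (if t \<in> {..p} then g' t else h' t)) (at t within UNIV)"
    by (intro has_vector_derivative_If_within_closures[where T="{p<..}"])
       (use assms in \<open>auto intro: has_vector_derivative_at_within\<close>)
  then show ?thesis by simp
qed

lemma continuous_on_glue:
  fixes g h :: "real \<Rightarrow> complex"
  assumes "continuous_on UNIV g" "continuous_on UNIV h" "g p = h p"
  shows "continuous_on UNIV (\<lambda>t. if t \<le> p then g t else h t)"
  by (rule continuous_on_cases_le) (use assms in \<open>auto intro: continuous_on_subset\<close>)

lemma continuous_vanishing_on_closure:
  fixes f :: "real \<Rightarrow> complex"
  assumes "continuous_on UNIV f" "\<And>t. t \<in> S \<Longrightarrow> f t = 0" "x \<in> closure S"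
  shows "f x = 0"
proof -
  have "closed (f -` {0})" using assms(1) by (intro closed_vimage) auto
  moreover have "S \<subseteq> f -` {0}" using assms(2) by auto
  ultimately have "closure S \<subseteq> f -` {0}" by (rule closure_minimal[rotated])
  then show ?thesis using assms(3) by auto
qed

lemma has_vector_derivative_vanishing_near:
  fixes w :: "real \<Rightarrow> complex"
  assumes "(w has_vector_derivative D) (at t)" "open S" "t \<in> S" "\<And>y. y \<in> S \<Longrightarrow> w y = 0"
  shows "D = 0"
proof -
  have "(w has_vector_derivative 0) (at t)"
    by (rule has_vector_derivative_transform_within_open[of "\<lambda>_. 0" _ _ S])
       (use assms(2-4) in auto)
  then show ?thesis using assms(1) vector_derivative_unique_at by blast
qed

section \<open>The explicit Jost solution\<close>

definition plane_wave :: "complex \<Rightarrow> real \<Rightarrow> complex" where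
  "plane_wave \<kappa> t = exp (\<i> * of_real t * \<kappa>)"

definition jost_left_val :: "complex \<Rightarrow> complex \<Rightarrow> real \<Rightarrow> complex" where
  "jost_left_val \<kappa> \<mu> d = trig_sol \<mu> d (plane_wave \<kappa> d) (\<i> * \<kappa> * plane_wave \<kappa> d) (-d)"

definition jost_left_slope :: "complex \<Rightarrow> complex \<Rightarrow> real \<Rightarrow> complex" where
  "jost_left_slope \<kappa> \<mu> d = trig_sol_deriv \<mu> d (plane_wave \<kappa> d) (\<i> * \<kappa> * plane_wave \<kappa> d) (-d)"

definition jost :: "complex \<Rightarrow> complex \<Rightarrow> real \<Rightarrow> real \<Rightarrow> complex" where
  "jost \<kappa> \<mu> d t =
     (if t \<le> -d then trig_sol \<kappa> (-d) (jost_left_val \<kappa> \<mu> d) (jost_left_slope \<kappa> \<mu> d) t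
      else if t \<le> d then trig_sol \<mu> d (plane_wave \<kappa> d) (\<i> * \<kappa> * plane_wave \<kappa> d) t
      else trig_sol \<kappa> d (plane_wave \<kappa> d) (\<i> * \<kappa> * plane_wave \<kappa> d) t)"

definition jost_deriv :: "complex \<Rightarrow> complex \<Rightarrow> real \<Rightarrow> real \<Rightarrow> complex" where
  "jost_deriv \<kappa> \<mu> d t =
     (if t \<le> -d then trig_sol_deriv \<kappa> (-d) (jost_left_val \<kappa> \<mu> d) (jost_left_slope \<kappa> \<mu> d) t
      else if t \<le> d then trig_sol_deriv \<mu> d (plane_wave \<kappa> d) (\<i> * \<kappa> * plane_wave \<kappa> d) t
      else trig_sol_deriv \<kappa> d (plane_wave \<kappa> d) (\<i> * \<kappa> * plane_wave \<kappa> d) t)"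

lemma trig_sol_plane_wave:
  assumes "\<kappa> \<noteq> 0"
  shows "trig_sol \<kappa> d (plane_wave \<kappa> d) (\<i> * \<kappa> * plane_wave \<kappa> d) t = plane_wave \<kappa> t"
proof -
  have "trig_sol \<kappa> d (plane_wave \<kappa> d) (\<i> * \<kappa> * plane_wave \<kappa> d) t
      = plane_wave \<kappa> d * (cos (\<kappa> * of_real (t - d)) + \<i> * sin (\<kappa> * of_real (t - d)))"
    unfolding trig_sol_def using assms by (simp add: field_simps)
  also have "\<dots> = plane_wave \<kappa> d * exp (\<i> * (\<kappa> * of_real (t - d)))"
    by (simp add: exp_Euler)
  also have "\<dots> = plane_wave \<kappa> t"
    unfolding plane_wave_def by (simp add: exp_add[symmetric] algebra_simps)
  finally show ?thesis .
qed

lemma jost_right: "0 < d \<Longrightarrow> \<kappa> \<noteq> 0 \<Longrightarrow> d \<le> t \<Longrightarrow> jost \<kappa> \<mu> d t = plane_wave \<kappa> t"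
  using trig_sol_plane_wave[of \<kappa> d t] by (cases "t = d") (auto simp: jost_def plane_wave_def)

lemma jost_middle:
  "0 < d \<Longrightarrow> -d \<le> t \<Longrightarrow> t \<le> d \<Longrightarrow>
     jost \<kappa> \<mu> d t = trig_sol \<mu> d (plane_wave \<kappa> d) (\<i> * \<kappa> * plane_wave \<kappa> d) t"
  by (cases "t = -d") (auto simp: jost_def jost_left_val_def)

lemma jost_left: "t \<le> -d \<Longrightarrow> jost \<kappa> \<mu> d t = trig_sol \<kappa> (-d) (jost_left_val \<kappa> \<mu> d) (jost_left_slope \<kappa> \<mu> d) t"
  by (simp add: jost_def)

lemma jost_left_val_eq: "0 < d \<Longrightarrow> jost_left_val \<kappa> \<mu> d = jost \<kappa> \<mu> d (-d)"
  by (simp add: jost_left)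

lemma jost_deriv_zero:
  "0 < d \<Longrightarrow> jost_deriv \<kappa> \<mu> d 0 = trig_sol_deriv \<mu> d (plane_wave \<kappa> d) (\<i> * \<kappa> * plane_wave \<kappa> d) 0"
  by (simp add: jost_deriv_def)

lemma has_vector_derivative_jost:
  assumes "\<kappa> \<noteq> 0" "\<mu> \<noteq> 0" "0 < d"
  shows "(jost \<kappa> \<mu> d has_vector_derivative jost_deriv \<kappa> \<mu> d t) (at t)"
proof -
  let ?E = "plane_wave \<kappa> d"
  have inner: "((\<lambda>t. if t \<le> d then trig_sol \<mu> d ?E (\<i> * \<kappa> * ?E) t else trig_sol \<kappa> d ?E (\<i> * \<kappa> * ?E) t)
     has_vector_derivative (if t \<le> d then trig_sol_deriv \<mu> d ?E (\<i> * \<kappa> * ?E) t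
                            else trig_sol_deriv \<kappa> d ?E (\<i> * \<kappa> * ?E) t)) (at t)" for t
    by (rule has_vector_derivative_glue) (use assms in \<open>auto intro: has_vector_derivative_trig_sol\<close>)
  show ?thesis
    unfolding jost_def jost_deriv_def
    by (rule has_vector_derivative_glue[OF _ inner])
       (use assms in \<open>auto intro: has_vector_derivative_trig_sol simp: jost_left_val_def jost_left_slope_def\<close>)
qed

lemma continuous_on_jost_deriv:
  assumes "0 < d"
  shows "continuous_on UNIV (jost_deriv \<kappa> \<mu> d)"
proof -
  let ?E = "plane_wave \<kappa> d"
  have inner: "continuous_on UNIV (\<lambda>t. if t \<le> d then trig_sol_deriv \<mu> d ?E (\<i> * \<kappa> * ?E) t
                                        else trig_sol_deriv \<kappa> d ?E (\<i> * \<kappa> * ?E) t)"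
    by (rule continuous_on_glue) (auto intro: continuous_on_trig_sol_deriv)
  show ?thesis
    unfolding jost_deriv_def
    by (rule continuous_on_glue[OF _ inner])
       (use assms in \<open>auto intro: continuous_on_trig_sol_deriv simp: jost_left_slope_def\<close>)
qed

lemma has_vector_derivative_jost_deriv:
  assumes "0 < d" "t \<noteq> d" "t \<noteq> -d"
  shows "(jost_deriv \<kappa> \<mu> d has_vector_derivative
           (if \<bar>t\<bar> < d then - \<mu>\<^sup>2 else - \<kappa>\<^sup>2) * jost \<kappa> \<mu> d t) (at t)"
proof -
  consider "t < -d" | "-d < t" "t < d" | "d < t" using assms by linarith
  then show ?thesis
  proof cases
    case 1
    then have "(if \<bar>t\<bar> < d then - \<mu>\<^sup>2 else - \<kappa>\<^sup>2) * jost \<kappa> \<mu> d t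
        = - \<kappa>\<^sup>2 * trig_sol \<kappa> (-d) (jost_left_val \<kappa> \<mu> d) (jost_left_slope \<kappa> \<mu> d) t"
      using assms by (simp add: jost_def)
    then show ?thesis
      by (rule ssubst, intro has_vector_derivative_transform_within_open[OF
            has_vector_derivative_trig_sol_deriv, where S="{..< -d}"])
         (use 1 in \<open>auto simp: jost_deriv_def\<close>)
  next
    case 2
    then have "(if \<bar>t\<bar> < d then - \<mu>\<^sup>2 else - \<kappa>\<^sup>2) * jost \<kappa> \<mu> d t
        = - \<mu>\<^sup>2 * trig_sol \<mu> d (plane_wave \<kappa> d) (\<i> * \<kappa> * plane_wave \<kappa> d) t"
      by (auto simp: jost_def)
    then show ?thesis
      by (rule ssubst, intro has_vector_derivative_transform_within_open[OF
            has_vector_derivative_trig_sol_deriv, where S="{-d<..<d}"])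
         (use 2 in \<open>auto simp: jost_deriv_def\<close>)
  next
    case 3
    then have "(if \<bar>t\<bar> < d then - \<mu>\<^sup>2 else - \<kappa>\<^sup>2) * jost \<kappa> \<mu> d t
        = - \<kappa>\<^sup>2 * trig_sol \<kappa> d (plane_wave \<kappa> d) (\<i> * \<kappa> * plane_wave \<kappa> d) t"
      using assms by (simp add: jost_def)
    then show ?thesis
      by (rule ssubst, intro has_vector_derivative_transform_within_open[OF
            has_vector_derivative_trig_sol_deriv, where S="{d<..}"])
         (use 3 assms in \<open>auto simp: jost_deriv_def\<close>)
  qed
qed

section \<open>Identification of \<open>u\<^sub>\<plusminus>\<close>, the Wronskian and the resolvent\<close>

lemma qpot_inside: "\<bar>t\<bar> \<le> d \<Longrightarrow> qpot k1 k2 d t = k2\<^sup>2 - k1\<^sup>2"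
  by (auto simp: qpot_def)

lemma qpot_outside: "d < \<bar>t\<bar> \<Longrightarrow> qpot k1 k2 d t = 0"
  by (auto simp: qpot_def)

lemma qpot_minus: "qpot k1 k2 d (-t) = qpot k1 k2 d t"
  by (auto simp: qpot_def)

lemma abs_less_square_iff: "\<bar>x::real\<bar> < \<bar>y\<bar> \<longleftrightarrow> x\<^sup>2 < y\<^sup>2"
  using abs_le_square_iff[of y x] by linarith

lemma kappa_outside: "k < \<bar>\<xi>\<bar> \<Longrightarrow> kappa k \<xi> = \<i> * of_real (sqrt (\<xi>\<^sup>2 - k\<^sup>2))"
  by (simp add: kappa_def)

lemma kappa_inside: "\<bar>\<xi>\<bar> \<le> k \<Longrightarrow> kappa k \<xi> = of_real (sqrt (k\<^sup>2 - \<xi>\<^sup>2))"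
  by (simp add: kappa_def)

lemma kappa_squared:
  assumes "0 \<le> k"
  shows "(kappa k \<xi>)\<^sup>2 = of_real (k\<^sup>2 - \<xi>\<^sup>2)"
proof (cases "\<bar>\<xi>\<bar> \<le> k")
  case True
  then have "\<xi>\<^sup>2 \<le> k\<^sup>2" using assms abs_le_square_iff[of \<xi> k] by simp
  then show ?thesis using True by (simp add: kappa_inside flip: of_real_power)
next
  case False
  then have "k\<^sup>2 \<le> \<xi>\<^sup>2" using assms abs_le_square_iff[of k \<xi>] by simp
  then show ?thesis using False by (simp add: kappa_outside power_mult_distrib flip: of_real_power)
qed

lemma kappa_nonzero:
  assumes "0 < k" "\<bar>\<xi>\<bar> \<noteq> k"
  shows "kappa k \<xi> \<noteq> 0"
proof (cases "\<bar>\<xi>\<bar> \<le> k")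
  case True
  then have "\<xi>\<^sup>2 < k\<^sup>2" using assms abs_less_square_iff[of \<xi> k] by simp
  then show ?thesis using True by (simp add: kappa_def)
next
  case False
  then have "k\<^sup>2 < \<xi>\<^sup>2" using assms abs_less_square_iff[of k \<xi>] by simp
  then show ?thesis using False by (simp add: kappa_def)
qed

lemma is_sol_jost:
  assumes "0 < k1" "k1 < k2" "0 < d" "\<bar>\<xi>\<bar> \<noteq> k1" "\<bar>\<xi>\<bar> \<noteq> k2"
  shows "is_sol k1 k2 d \<xi> (jost (kappa k1 \<xi>) (kappa k2 \<xi>) d)"
  unfolding is_sol_def
proof (intro exI conjI allI impI)
  let ?\<kappa> = "kappa k1 \<xi>" and ?\<mu> = "kappa k2 \<xi>"
  have sq: "?\<kappa>\<^sup>2 = of_real (k1\<^sup>2 - \<xi>\<^sup>2)" "?\<mu>\<^sup>2 = of_real (k2\<^sup>2 - \<xi>\<^sup>2)"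
    using assms kappa_squared[of k1 \<xi>] kappa_squared[of k2 \<xi>] by auto
  show "continuous_on UNIV (jost_deriv ?\<kappa> ?\<mu> d)"
    using assms by (intro continuous_on_jost_deriv)
  show "(jost ?\<kappa> ?\<mu> d has_vector_derivative jost_deriv ?\<kappa> ?\<mu> d x) (at x)" for x
    using assms kappa_nonzero by (intro has_vector_derivative_jost) auto
  fix x assume x: "x \<noteq> d \<and> x \<noteq> - d"
  have "(if \<bar>x\<bar> < d then - ?\<mu>\<^sup>2 else - ?\<kappa>\<^sup>2) = complex_of_real (\<xi>\<^sup>2 - k1\<^sup>2 - qpot k1 k2 d x)"
    using x sq by (auto simp: qpot_inside qpot_outside)
  then show "(jost_deriv ?\<kappa> ?\<mu> d has_vector_derivative
               complex_of_real (\<xi>\<^sup>2 - k1\<^sup>2 - qpot k1 k2 d x) * jost ?\<kappa> ?\<mu> d x) (at x)"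
    using has_vector_derivative_jost_deriv[of d x ?\<kappa> ?\<mu>] assms x by auto
qed

lemma is_sol_diff:
  assumes "is_sol k1 k2 d \<xi> u" "is_sol k1 k2 d \<xi> v"
  shows "is_sol k1 k2 d \<xi> (\<lambda>t. u t - v t)"
proof -
  obtain u' where u': "continuous_on UNIV u'" "\<And>x. (u has_vector_derivative u' x) (at x)"
    "\<And>x. x \<noteq> d \<and> x \<noteq> -d \<Longrightarrow>
       (u' has_vector_derivative complex_of_real (\<xi>\<^sup>2 - k1\<^sup>2 - qpot k1 k2 d x) * u x) (at x)"
    using assms(1) unfolding is_sol_def by blast
  obtain v' where v': "continuous_on UNIV v'" "\<And>x. (v has_vector_derivative v' x) (at x)"
    "\<And>x. x \<noteq> d \<and> x \<noteq> -d \<Longrightarrow>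
       (v' has_vector_derivative complex_of_real (\<xi>\<^sup>2 - k1\<^sup>2 - qpot k1 k2 d x) * v x) (at x)"
    using assms(2) unfolding is_sol_def by blast
  show ?thesis unfolding is_sol_def
  proof (intro exI[of _ "\<lambda>t. u' t - v' t"] conjI allI impI)
    show "continuous_on UNIV (\<lambda>t. u' t - v' t)" using u'(1) v'(1) by (rule continuous_on_diff)
    show "((\<lambda>t. u t - v t) has_vector_derivative u' x - v' x) (at x)" for x
      using u'(2) v'(2) by (rule has_vector_derivative_diff)
    fix x assume "x \<noteq> d \<and> x \<noteq> - d"
    from has_vector_derivative_diff[OF u'(3)[OF this] v'(3)[OF this]]
    show "((\<lambda>t. u' t - v' t) has_vector_derivative
            complex_of_real (\<xi>\<^sup>2 - k1\<^sup>2 - qpot k1 k2 d x) * (u x - v x)) (at x)"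
      by (simp add: right_diff_distrib)
  qed
qed

lemma is_sol_reflect:
  assumes "is_sol k1 k2 d \<xi> u"
  shows "is_sol k1 k2 d \<xi> (\<lambda>t. u (-t))"
proof -
  obtain u' where cu': "continuous_on UNIV u'" and du: "\<And>x. (u has_vector_derivative u' x) (at x)"
    and du': "\<And>x. x \<noteq> d \<and> x \<noteq> -d \<Longrightarrow>
       (u' has_vector_derivative complex_of_real (\<xi>\<^sup>2 - k1\<^sup>2 - qpot k1 k2 d x) * u x) (at x)"
    using assms unfolding is_sol_def by blast
  have minus: "(uminus has_vector_derivative (-1)) (at (x::real))" for x
    by (rule derivative_eq_intros refl)+
  show ?thesis unfolding is_sol_def
  proof (intro exI[of _ "\<lambda>t. - u' (-t)"] conjI allI impI)
    show "continuous_on UNIV (\<lambda>t. - u' (- t))"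
      by (intro continuous_on_minus continuous_on_compose2[OF cu'] continuous_intros) auto
    fix x
    show "((\<lambda>t. u (- t)) has_vector_derivative - u' (- x)) (at x)"
      using vector_diff_chain_at[OF minus du] by (simp add: o_def)
    assume "x \<noteq> d \<and> x \<noteq> - d"
    then have "((u' \<circ> uminus) has_vector_derivative
        (-1) *\<^sub>R (complex_of_real (\<xi>\<^sup>2 - k1\<^sup>2 - qpot k1 k2 d (-x)) * u (-x))) (at x)"
      by (intro vector_diff_chain_at[OF minus du']) auto
    from has_vector_derivative_minus[OF this]
    show "((\<lambda>t. - u' (- t)) has_vector_derivative
            complex_of_real (\<xi>\<^sup>2 - k1\<^sup>2 - qpot k1 k2 d x) * u (- x)) (at x)"
      by (simp add: o_def qpot_minus)
  qed
qed

lemma is_sol_vanishing_on_right: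
  assumes k: "0 < k1" "k1 < k2" and d: "0 < d" and \<xi>: "\<bar>\<xi>\<bar> \<noteq> k1" "\<bar>\<xi>\<bar> \<noteq> k2"
    and sol: "is_sol k1 k2 d \<xi> w" and right: "\<And>t. d < t \<Longrightarrow> w t = 0"
  shows "w t = 0"
proof -
  let ?\<kappa> = "kappa k1 \<xi>" and ?\<mu> = "kappa k2 \<xi>"
  have nz: "?\<kappa> \<noteq> 0" "?\<mu> \<noteq> 0" using k \<xi> kappa_nonzero[of k1 \<xi>] kappa_nonzero[of k2 \<xi>] by auto
  have sq: "?\<kappa>\<^sup>2 = of_real (k1\<^sup>2 - \<xi>\<^sup>2)" "?\<mu>\<^sup>2 = of_real (k2\<^sup>2 - \<xi>\<^sup>2)"
    using k kappa_squared[of k1 \<xi>] kappa_squared[of k2 \<xi>] by auto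
  obtain w' where cw': "continuous_on UNIV w'" and dw: "\<And>t. (w has_vector_derivative w' t) (at t)"
    and dw': "\<And>t. t \<noteq> d \<and> t \<noteq> -d \<Longrightarrow>
       (w' has_vector_derivative complex_of_real (\<xi>\<^sup>2 - k1\<^sup>2 - qpot k1 k2 d t) * w t) (at t)"
    using sol unfolding is_sol_def by blast
  have cw: "continuous_on UNIV w"
    using dw by (intro continuous_on_vector_derivative) (auto intro: has_vector_derivative_at_within)
  have dw'_in: "(w' has_vector_derivative (- ?\<mu>\<^sup>2) * w t) (at t)" if "\<bar>t\<bar> < d" for t
  proof -
    have "complex_of_real (\<xi>\<^sup>2 - k1\<^sup>2 - qpot k1 k2 d t) = - ?\<mu>\<^sup>2"
      using that sq by (auto simp: qpot_inside)
    moreover have "t \<noteq> d \<and> t \<noteq> -d" using that by auto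
    ultimately show ?thesis using dw' by metis
  qed
  have dw'_out: "(w' has_vector_derivative (- ?\<kappa>\<^sup>2) * w t) (at t)" if "d < \<bar>t\<bar>" for t
  proof -
    have "complex_of_real (\<xi>\<^sup>2 - k1\<^sup>2 - qpot k1 k2 d t) = - ?\<kappa>\<^sup>2"
      using that sq by (auto simp: qpot_outside)
    moreover have "t \<noteq> d \<and> t \<noteq> -d" using that d by auto
    ultimately show ?thesis using dw' by metis
  qed
  have w'_right: "w' t = 0" if "d < t" for t
    by (rule has_vector_derivative_vanishing_near[OF dw, where S="{d<..}"]) (use that right in auto)
  have cw_on: "continuous_on S w" "continuous_on S w'" for S
    using continuous_on_subset[OF cw subset_UNIV] continuous_on_subset[OF cw' subset_UNIV] by auto
  have data_d: "w d = 0" "w' d = 0"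
    using continuous_vanishing_on_closure[OF cw, of "{d<..}"]
      continuous_vanishing_on_closure[OF cw', of "{d<..}"] right w'_right by auto
  have w_mid: "w t = 0" if "t \<in> {-d..d}" for t
  proof (rule trig_ode_zero_data_imp_zero[of ?\<mu> "{-d..d}" "{-d, d}" d w w'])
    show "(w' has_vector_derivative - ?\<mu>\<^sup>2 * w s) (at s)" if "s \<in> {-d..d} - {-d, d}" for s
      using that by (intro dw'_in) auto
  qed (use that d nz dw cw_on data_d in auto)
  have w'_mid: "w' t = 0" if "t \<in> {-d<..<d}" for t
    by (rule has_vector_derivative_vanishing_near[OF dw, where S="{-d<..<d}"]) (use that w_mid in auto)
  have "-d \<in> closure {-d<..<d}" using d by simp
  then have "w' (-d) = 0"
    using continuous_vanishing_on_closure[OF cw', of "{-d<..<d}" "-d"] w'_mid by blast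
  then have data_minus_d: "w (-d) = 0" "w' (-d) = 0" using w_mid d by auto
  have w_left: "w t = 0" if "t \<in> {..-d}" for t
  proof (rule trig_ode_zero_data_imp_zero[of ?\<kappa> "{..-d}" "{-d}" "-d" w w'])
    show "(w' has_vector_derivative - ?\<kappa>\<^sup>2 * w s) (at s)" if "s \<in> {..-d} - {-d}" for s
      using that d by (intro dw'_out) auto
  qed (use that nz dw cw_on data_minus_d in auto)
  show ?thesis
    using right w_mid w_left by (cases "d < t"; cases "t < -d") auto
qed

lemma jost_tail:
  assumes "0 < k1" "0 < d" "\<bar>\<xi>\<bar> \<noteq> k1" "d < x"
  shows "jost (kappa k1 \<xi>) (kappa k2 \<xi>) d x = exp (\<i> * of_real x * kappa k1 \<xi>)"
  using assms jost_right[of d "kappa k1 \<xi>" x] kappa_nonzero by (auto simp: plane_wave_def)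

lemma is_sol_tail_eq_jost:
  assumes "0 < k1" "k1 < k2" "0 < d" "\<bar>\<xi>\<bar> \<noteq> k1" "\<bar>\<xi>\<bar> \<noteq> k2"
    and "is_sol k1 k2 d \<xi> u" "\<And>x. d < x \<Longrightarrow> u x = exp (\<i> * of_real x * kappa k1 \<xi>)"
  shows "u = jost (kappa k1 \<xi>) (kappa k2 \<xi>) d"
proof -
  have "u t - jost (kappa k1 \<xi>) (kappa k2 \<xi>) d t = 0" for t
    by (rule is_sol_vanishing_on_right[OF assms(1-5) is_sol_diff[OF assms(6) is_sol_jost[OF assms(1-5)]]])
       (use assms jost_tail in auto)
  then show ?thesis by auto
qed

lemma u_plus_eq_jost:
  assumes "0 < k1" "k1 < k2" "0 < d" "\<bar>\<xi>\<bar> \<noteq> k1" "\<bar>\<xi>\<bar> \<noteq> k2"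
  shows "u_plus k1 k2 d \<xi> = jost (kappa k1 \<xi>) (kappa k2 \<xi>) d"
  unfolding u_plus_def
proof (rule the_equality)
  show "is_sol k1 k2 d \<xi> (jost (kappa k1 \<xi>) (kappa k2 \<xi>) d) \<and>
      (\<forall>x>d. jost (kappa k1 \<xi>) (kappa k2 \<xi>) d x = exp (\<i> * of_real x * kappa k1 \<xi>))"
    using is_sol_jost[OF assms] jost_tail[OF assms(1,3,4)] by blast
  show "u = jost (kappa k1 \<xi>) (kappa k2 \<xi>) d"
    if "is_sol k1 k2 d \<xi> u \<and> (\<forall>x>d. u x = exp (\<i> * of_real x * kappa k1 \<xi>))" for u
    using that by (intro is_sol_tail_eq_jost[OF assms]) auto
qed

text \<open>Since \<open>q\<close> is even, \<open>u\<^sub>-\<close> is the reflection of \<open>u\<^sub>+\<close>.\<close>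
lemma u_minus_eq_jost:
  assumes "0 < k1" "k1 < k2" "0 < d" "\<bar>\<xi>\<bar> \<noteq> k1" "\<bar>\<xi>\<bar> \<noteq> k2"
  shows "u_minus k1 k2 d \<xi> = (\<lambda>t. jost (kappa k1 \<xi>) (kappa k2 \<xi>) d (-t))"
  unfolding u_minus_def
proof (rule the_equality)
  show "is_sol k1 k2 d \<xi> (\<lambda>t. jost (kappa k1 \<xi>) (kappa k2 \<xi>) d (-t)) \<and>
      (\<forall>x< -d. jost (kappa k1 \<xi>) (kappa k2 \<xi>) d (-x) = exp (- \<i> * of_real x * kappa k1 \<xi>))"
    using is_sol_reflect[OF is_sol_jost[OF assms]] jost_tail[OF assms(1,3,4)] by auto
  fix v assume v: "is_sol k1 k2 d \<xi> v \<and> (\<forall>x< -d. v x = exp (- \<i> * of_real x * kappa k1 \<xi>))"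
  have "(\<lambda>t. v (-t)) = jost (kappa k1 \<xi>) (kappa k2 \<xi>) d"
    by (rule is_sol_tail_eq_jost[OF assms is_sol_reflect]) (use v in auto)
  then show "v = (\<lambda>t. jost (kappa k1 \<xi>) (kappa k2 \<xi>) d (-t))"
    by (metis minus_minus)
qed

definition jost_wronsk :: "complex \<Rightarrow> complex \<Rightarrow> real \<Rightarrow> complex" where
  "jost_wronsk \<kappa> \<mu> d = 2 * jost \<kappa> \<mu> d 0 * jost_deriv \<kappa> \<mu> d 0"

lemma wronsk_eq_jost_wronsk:
  assumes "0 < k1" "k1 < k2" "0 < d" "\<bar>\<xi>\<bar> \<noteq> k1" "\<bar>\<xi>\<bar> \<noteq> k2"
  shows "wronsk k1 k2 d \<xi> = jost_wronsk (kappa k1 \<xi>) (kappa k2 \<xi>) d"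
proof -
  let ?\<kappa> = "kappa k1 \<xi>" and ?\<mu> = "kappa k2 \<xi>"
  have D: "(jost ?\<kappa> ?\<mu> d has_vector_derivative jost_deriv ?\<kappa> ?\<mu> d t) (at t)" for t
    using assms kappa_nonzero by (intro has_vector_derivative_jost) auto
  have minus: "(uminus has_vector_derivative (-1)) (at (x::real))" for x
    by (rule derivative_eq_intros refl)+
  have "vector_derivative (\<lambda>t. jost ?\<kappa> ?\<mu> d (-t)) (at 0) = - jost_deriv ?\<kappa> ?\<mu> d 0"
    using vector_diff_chain_at[OF minus D, of 0] by (intro vector_derivative_at) (simp add: o_def)
  then show ?thesis
    unfolding wronsk_def jost_wronsk_def u_plus_eq_jost[OF assms] u_minus_eq_jost[OF assms]
      vector_derivative_at[OF D]
    by simp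
qed

definition jost_ratio :: "complex \<Rightarrow> complex \<Rightarrow> real \<Rightarrow> real \<Rightarrow> real \<Rightarrow> real" where
  "jost_ratio \<kappa> \<mu> d a b = cmod (jost \<kappa> \<mu> d b) * cmod (jost \<kappa> \<mu> d (-a)) / cmod (jost_wronsk \<kappa> \<mu> d)"

lemma norm_resolv_eq_jost_ratio:
  assumes "0 < k1" "k1 < k2" "0 < d" "\<bar>\<xi>\<bar> \<noteq> k1" "\<bar>\<xi>\<bar> \<noteq> k2"
  shows "cmod (resolv k1 k2 d \<xi> x y) = jost_ratio (kappa k1 \<xi>) (kappa k2 \<xi>) d (min x y) (max x y)"
  unfolding resolv_def jost_ratio_def u_plus_eq_jost[OF assms] u_minus_eq_jost[OF assms]
    wronsk_eq_jost_wronsk[OF assms]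
  by (cases "y < x") (simp_all add: norm_mult norm_divide mult.commute)

section \<open>Real frequencies: the regime \<open>\<bar>\<xi>\<bar> < k\<^sub>1\<close>\<close>

lemma trig_sol_of_real:
  "trig_sol (of_real \<nu>) p a b t = a * of_real (cos (\<nu> * (t - p))) + b * of_real (sin (\<nu> * (t - p)) / \<nu>)"
  unfolding trig_sol_def of_real_diff[symmetric] of_real_mult[symmetric] cos_of_real sin_of_real by simp

lemma trig_sol_deriv_of_real:
  "trig_sol_deriv (of_real \<nu>) p a b t = b * of_real (cos (\<nu> * (t - p))) - a * of_real (\<nu> * sin (\<nu> * (t - p)))"
  unfolding trig_sol_deriv_def of_real_diff[symmetric] of_real_mult[symmetric] cos_of_real sin_of_real
  by simp

lemma abs_sin_mult_div_le: "0 < (\<nu>::real) \<Longrightarrow> \<bar>sin (\<nu> * x) / \<nu>\<bar> \<le> \<bar>x\<bar>"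
  using abs_sin_x_le_abs_x[of "\<nu> * x"] by (simp add: abs_mult divide_le_eq mult.commute)

lemma norm_plane_wave_of_real [simp]: "cmod (plane_wave (of_real k) t) = 1"
  unfolding plane_wave_def by (metis mult.commute mult.left_commute norm_exp_i_times of_real_mult)

lemma norm_jost_of_real_le:
  assumes kr: "0 < kr" and mr: "0 < mr" and d: "0 < d" and t: "-d \<le> t"
  shows "cmod (jost (of_real kr) (of_real mr) d t) \<le> 1 + 2 * d * kr"
proof (cases "t \<le> d")
  case True
  let ?E = "plane_wave (of_real kr) d"
  have "cmod (jost (of_real kr) (of_real mr) d t)
      = cmod (?E * of_real (cos (mr * (t - d))) + \<i> * of_real kr * ?E * of_real (sin (mr * (t - d)) / mr))"
    using jost_middle[OF d t True] by (simp add: trig_sol_of_real)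
  also have "\<dots> \<le> cmod (?E * of_real (cos (mr * (t - d))))
                   + cmod (\<i> * of_real kr * ?E * of_real (sin (mr * (t - d)) / mr))"
    by (rule norm_triangle_ineq)
  also have "\<dots> = \<bar>cos (mr * (t - d))\<bar> + kr * \<bar>sin (mr * (t - d)) / mr\<bar>"
    using kr by (simp add: norm_mult norm_divide)
  also have "\<dots> \<le> 1 + kr * (2 * d)"
    using abs_sin_mult_div_le[OF mr, of "t - d"] t True kr
    by (intro add_mono mult_left_mono) (auto simp: abs_le_iff)
  finally show ?thesis by (simp add: mult_ac)
next
  case False
  then show ?thesis using jost_right[of d "of_real kr" t] kr d by simp
qed

text \<open>By Lagrange's identity the two factors of \<open>\<bar>W\<bar>\<close> have product at least \<open>k\<^sub>r (c\<^sup>2 + s\<^sup>2) = k\<^sub>r\<close>.\<close>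
lemma norm_jost_wronsk_of_real_ge:
  assumes kr: "0 < kr" and mr: "0 < mr" and d: "0 < d"
  shows "2 * kr \<le> cmod (jost_wronsk (of_real kr) (of_real mr) d)"
    and "mr * \<bar>sin (2 * mr * d)\<bar> \<le> cmod (jost_wronsk (of_real kr) (of_real mr) d)"
proof -
  define c where "c = cos (mr * d)"
  define s where "s = sin (mr * d)"
  let ?E = "plane_wave (of_real kr) d"
  have "jost (of_real kr) (of_real mr) d 0 = ?E * (of_real c + \<i> * of_real (- kr * s / mr))"
    using jost_middle[OF d, of 0] d by (simp add: trig_sol_of_real c_def s_def algebra_simps)
  moreover have "jost_deriv (of_real kr) (of_real mr) d 0 = ?E * (of_real (mr * s) + \<i> * of_real (kr * c))"
    using jost_deriv_zero[OF d] by (simp add: trig_sol_deriv_of_real c_def s_def algebra_simps)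
  moreover have "cmod (of_real x + \<i> * of_real y) = sqrt (x\<^sup>2 + y\<^sup>2)" for x y
    by (simp add: cmod_def)
  ultimately have W: "cmod (jost_wronsk (of_real kr) (of_real mr) d)
      = 2 * sqrt (c\<^sup>2 + (kr * s / mr)\<^sup>2) * sqrt ((mr * s)\<^sup>2 + (kr * c)\<^sup>2)"
    unfolding jost_wronsk_def by (simp only: norm_mult norm_plane_wave_of_real) simp
  have "(c\<^sup>2 + (kr * s / mr)\<^sup>2) * ((mr * s)\<^sup>2 + (kr * c)\<^sup>2)
      = (kr * (c\<^sup>2 + s\<^sup>2))\<^sup>2 + (c * mr * s - kr * s / mr * kr * c)\<^sup>2"
    using mr by (simp add: field_simps power2_eq_square)
  moreover have "c\<^sup>2 + s\<^sup>2 = 1" unfolding c_def s_def by simp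
  ultimately have "sqrt (kr\<^sup>2) \<le> sqrt ((c\<^sup>2 + (kr * s / mr)\<^sup>2) * ((mr * s)\<^sup>2 + (kr * c)\<^sup>2))"
    by (intro real_sqrt_le_mono) simp
  then show "2 * kr \<le> cmod (jost_wronsk (of_real kr) (of_real mr) d)"
    using kr unfolding W by (simp add: real_sqrt_mult)
  have "sin (2 * mr * d) = 2 * s * c"
    unfolding s_def c_def using sin_double[of "mr * d"] by (simp add: mult_ac)
  then have "mr * \<bar>sin (2 * mr * d)\<bar> = 2 * \<bar>c\<bar> * \<bar>mr * s\<bar>"
    using mr by (simp add: abs_mult)
  also have "\<dots> \<le> 2 * sqrt (c\<^sup>2 + (kr * s / mr)\<^sup>2) * sqrt ((mr * s)\<^sup>2 + (kr * c)\<^sup>2)"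
    by (intro mult_mono real_le_rsqrt) auto
  finally show "mr * \<bar>sin (2 * mr * d)\<bar> \<le> cmod (jost_wronsk (of_real kr) (of_real mr) d)"
    unfolding W .
qed

lemma norm_jost_of_real_left_le:
  assumes kr: "0 < kr" and mr: "0 < mr" and d: "0 < d" and t: "t \<le> -d"
  shows "cmod (jost (of_real kr) (of_real mr) d t)
           \<le> (2 + 2 * d * kr) / kr * cmod (jost_wronsk (of_real kr) (of_real mr) d)"
proof -
  let ?k = "complex_of_real kr" and ?m = "complex_of_real mr"
  let ?E = "plane_wave ?k d" and ?W = "cmod (jost_wronsk ?k ?m d)"
  note W = norm_jost_wronsk_of_real_ge[OF kr mr d]
  have "cmod (jost_left_slope ?k ?m d)
      = cmod (\<i> * ?k * ?E * of_real (cos (2 * mr * d)) + ?E * of_real (mr * sin (2 * mr * d)))"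
    unfolding jost_left_slope_def by (simp add: trig_sol_deriv_of_real algebra_simps)
  also have "\<dots> \<le> kr * \<bar>cos (2 * mr * d)\<bar> + mr * \<bar>sin (2 * mr * d)\<bar>"
    using norm_triangle_ineq[of "\<i> * ?k * ?E * of_real (cos (2 * mr * d))" "?E * of_real (mr * sin (2 * mr * d))"]
      kr mr by (simp add: norm_mult abs_mult)
  also have "\<dots> \<le> kr * 1 + ?W"
    using W(2) kr by (intro add_mono mult_left_mono) auto
  finally have slope: "cmod (jost_left_slope ?k ?m d) \<le> kr + ?W" by simp
  have "cmod (jost ?k ?m d t)
      = cmod (jost_left_val ?k ?m d * of_real (cos (kr * (t + d)))
              + jost_left_slope ?k ?m d * of_real (sin (kr * (t + d)) / kr))"
    using jost_left[OF t] by (simp add: trig_sol_of_real)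
  also have "\<dots> \<le> cmod (jost_left_val ?k ?m d) * \<bar>cos (kr * (t + d))\<bar>
                   + cmod (jost_left_slope ?k ?m d) * (\<bar>sin (kr * (t + d))\<bar> / kr)"
    using norm_triangle_ineq[of "jost_left_val ?k ?m d * of_real (cos (kr * (t + d)))"
        "jost_left_slope ?k ?m d * of_real (sin (kr * (t + d)) / kr)"] kr
    by (simp add: norm_mult norm_divide)
  also have "\<dots> \<le> (1 + 2 * d * kr) * 1 + (kr + ?W) * (1 / kr)"
  proof (intro add_mono mult_mono)
    show "cmod (jost_left_val ?k ?m d) \<le> 1 + 2 * d * kr"
      unfolding jost_left_val_eq[OF d] using norm_jost_of_real_le[OF kr mr d] by simp
    show "\<bar>sin (kr * (t + d))\<bar> / kr \<le> 1 / kr" using kr by (simp add: divide_right_mono)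
  qed (use slope kr d in auto)
  also have "\<dots> = (2 + 2 * d * kr) * 1 + ?W / kr" using kr by (simp add: field_simps)
  also have "\<dots> \<le> (2 + 2 * d * kr) * (?W / (2 * kr)) + ?W / kr"
    using W(1) kr d by (intro add_mono mult_left_mono) auto
  also have "\<dots> \<le> (2 + 2 * d * kr) / kr * ?W" using kr d by (simp add: field_simps)
  finally show ?thesis .
qed

lemma jost_ratio_of_real_le:
  assumes kr: "0 < kr" and mr: "0 < mr" and d: "0 < d" and ab: "a < b"
  shows "jost_ratio (of_real kr) (of_real mr) d a b \<le> (1 + 2 * d * kr) * (2 + 2 * d * kr) / kr"
proof -
  let ?F = "jost (of_real kr) (of_real mr) d" and ?W = "cmod (jost_wronsk (of_real kr) (of_real mr) d)"
  have W: "2 * kr \<le> ?W" by (rule norm_jost_wronsk_of_real_ge[OF kr mr d])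
  have everywhere: "cmod (?F t) \<le> (2 + 2 * d * kr) / kr * ?W" for t
  proof (cases "t \<le> -d")
    case False
    have "cmod (?F t) \<le> (2 + 2 * d * kr) * 1"
      using norm_jost_of_real_le[OF kr mr d, of t] False by simp
    also have "\<dots> \<le> (2 + 2 * d * kr) * (?W / (2 * kr))"
      using W kr d by (intro mult_left_mono) auto
    also have "\<dots> \<le> (2 + 2 * d * kr) / kr * ?W" using kr d by (simp add: field_simps)
    finally show ?thesis .
  qed (use norm_jost_of_real_left_le[OF kr mr d] in auto)
  have "cmod (?F b) * cmod (?F (-a)) \<le> (1 + 2 * d * kr) * ((2 + 2 * d * kr) / kr * ?W)"
  proof (cases "b < -d")
    case True
    then have "cmod (?F (-a)) = 1" using jost_right[of d "of_real kr" "-a"] ab kr d by simp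
    moreover have "1 * cmod (?F b) \<le> (1 + 2 * d * kr) * ((2 + 2 * d * kr) / kr * ?W)"
      using everywhere[of b] kr d by (intro mult_mono) auto
    ultimately show ?thesis by simp
  next
    case False
    then show ?thesis using norm_jost_of_real_le[OF kr mr d, of b] everywhere[of "-a"] kr d
      by (intro mult_mono) auto
  qed
  also have "\<dots> = (1 + 2 * d * kr) * (2 + 2 * d * kr) / kr * ?W" by simp
  finally have "cmod (?F b) * cmod (?F (-a)) \<le> (1 + 2 * d * kr) * (2 + 2 * d * kr) / kr * ?W" .
  moreover have "0 < ?W" using W kr by linarith
  ultimately show ?thesis
    unfolding jost_ratio_def by (simp only: pos_divide_le_eq)
qed

section \<open>Imaginary outer frequency \<open>\<kappa> = i B\<close>\<close>

lemma cos_i_times_of_real: "cos (\<i> * complex_of_real x) = of_real (cosh x)"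
proof -
  have "cos (\<i> * complex_of_real x) = cosh (complex_of_real x)" by (simp add: cosh_conv_cos)
  also have "\<dots> = of_real (cosh x)" by (simp add: cosh_field_def exp_of_real flip: of_real_minus)
  finally show ?thesis .
qed

lemma sin_i_times_of_real: "sin (\<i> * complex_of_real x) = \<i> * of_real (sinh x)"
proof -
  have "sin (\<i> * complex_of_real x) = \<i> * sinh (complex_of_real x)" by (simp add: sinh_conv_sin)
  also have "sinh (complex_of_real x) = of_real (sinh x)"
    by (simp add: sinh_field_def exp_of_real flip: of_real_minus)
  finally show ?thesis by simp
qed

lemma plane_wave_imaginary: "plane_wave (\<i> * of_real B) t = of_real (exp (- B * t))"
proof -
  have "\<i> * complex_of_real t * (\<i> * complex_of_real B) = of_real (- B * t)" by (simp add: algebra_simps)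
  then show ?thesis unfolding plane_wave_def by (simp only: exp_of_real)
qed

text \<open>Up to the factor \<open>e\<^sup>-\<^sup>B\<^sup>d\<close>, the value and the slope of \<open>jost (i B) \<mu> d\<close> at \<open>0\<close>; they vanish
  exactly at even resp. odd bound states.\<close>
definition jost_even :: "real \<Rightarrow> complex \<Rightarrow> real \<Rightarrow> complex" where
  "jost_even B \<mu> d = cos (\<mu> * of_real d) + of_real B * sin (\<mu> * of_real d) / \<mu>"

definition jost_odd :: "real \<Rightarrow> complex \<Rightarrow> real \<Rightarrow> complex" where
  "jost_odd B \<mu> d = \<mu> * sin (\<mu> * of_real d) - of_real B * cos (\<mu> * of_real d)"

lemma jost_imaginary_right:
  "0 < d \<Longrightarrow> B \<noteq> 0 \<Longrightarrow> d \<le> t \<Longrightarrow> jost (\<i> * of_real B) \<mu> d t = of_real (exp (- B * t))"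
  using jost_right[of d "\<i> * of_real B" t] by (simp add: plane_wave_imaginary)

lemma jost_imaginary_middle:
  assumes "0 < d" "-d \<le> t" "t \<le> d"
  shows "jost (\<i> * of_real B) \<mu> d t
           = of_real (exp (- B * d)) * (cos (\<mu> * of_real (t - d)) - of_real B * (sin (\<mu> * of_real (t - d)) / \<mu>))"
  unfolding jost_middle[OF assms] trig_sol_def plane_wave_imaginary by (simp add: algebra_simps)

lemma jost_wronsk_imaginary:
  assumes "0 < d"
  shows "jost_wronsk (\<i> * of_real B) \<mu> d = 2 * (of_real (exp (- B * d)))\<^sup>2 * jost_even B \<mu> d * jost_odd B \<mu> d"
proof -
  have "jost (\<i> * of_real B) \<mu> d 0 = of_real (exp (- B * d)) * jost_even B \<mu> d"
    using jost_imaginary_middle[OF assms, of 0] assms by (simp add: jost_even_def algebra_simps)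
  moreover have "jost_deriv (\<i> * of_real B) \<mu> d 0 = of_real (exp (- B * d)) * jost_odd B \<mu> d"
    unfolding jost_deriv_zero[OF assms] trig_sol_deriv_def plane_wave_imaginary jost_odd_def
    by (simp add: algebra_simps)
  ultimately show ?thesis unfolding jost_wronsk_def by (simp add: power2_eq_square)
qed

text \<open>The coefficient of the exponential that grows towards \<open>-\<infinity>\<close> is proportional to the Wronskian.\<close>
lemma jost_imaginary_left:
  fixes B d :: real and \<mu> :: complex
  assumes B: "0 < B" and \<mu>: "\<mu> \<noteq> 0" and t: "t \<le> -d"
  defines "E \<equiv> complex_of_real (exp (- B * d))"
  shows "jost (\<i> * of_real B) \<mu> d t
     = of_real (exp (B * (t + d))) * (E * ((of_real B)\<^sup>2 + \<mu>\<^sup>2) * sin (2 * (\<mu> * of_real d)) / (2 * of_real B * \<mu>))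
     + of_real (exp (- B * (t + d))) * (- E * jost_even B \<mu> d * jost_odd B \<mu> d / of_real B)"
proof -
  define x where "x = \<mu> * of_real d"
  define c where "c = cos x"
  define s where "s = sin x"
  define y where "y = B * (t + d)"
  have arg: "\<mu> * of_real (- d - d) = - (2 * x)" unfolding x_def by (simp add: algebra_simps)
  have cos2: "cos (\<mu> * of_real (- d - d)) = c\<^sup>2 - s\<^sup>2"
    unfolding arg cos_minus cos_double c_def s_def ..
  have sin2: "sin (\<mu> * of_real (- d - d)) = - (2 * s * c)"
    unfolding arg sin_minus sin_double c_def s_def ..
  have E: "plane_wave (\<i> * of_real B) d = E" unfolding E_def by (rule plane_wave_imaginary)
  have P: "jost_left_val (\<i> * of_real B) \<mu> d = E * (c\<^sup>2 - s\<^sup>2 + 2 * of_real B * s * c / \<mu>)"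
    unfolding jost_left_val_def trig_sol_def E cos2 sin2 using \<mu> by (simp add: field_simps)
  have Q: "jost_left_slope (\<i> * of_real B) \<mu> d = E * (2 * \<mu> * s * c - of_real B * (c\<^sup>2 - s\<^sup>2))"
    unfolding jost_left_slope_def trig_sol_deriv_def E cos2 sin2 by (simp add: algebra_simps)
  have iy: "\<i> * of_real B * of_real (t - - d) = \<i> * complex_of_real y" unfolding y_def by simp
  have "jost (\<i> * of_real B) \<mu> d t
      = jost_left_val (\<i> * of_real B) \<mu> d * of_real (cosh y)
        + jost_left_slope (\<i> * of_real B) \<mu> d * of_real (sinh y) / of_real B"
    unfolding jost_left[OF t] trig_sol_def iy cos_i_times_of_real sin_i_times_of_real using B by simp
  also have "\<dots> = of_real (exp y) * (E * ((of_real B)\<^sup>2 + \<mu>\<^sup>2) * (2 * s * c) / (2 * of_real B * \<mu>))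
      + of_real (exp (- y)) * (- E * (c + of_real B * s / \<mu>) * (\<mu> * s - of_real B * c) / of_real B)"
    unfolding P Q cosh_field_def sinh_field_def using B \<mu>
    by (simp add: field_simps power2_eq_square)
  finally show ?thesis
    unfolding y_def jost_even_def jost_odd_def sin_double x_def[symmetric] c_def s_def by (simp add: mult_ac)
qed

lemma norm_product_le_outer:
  fixes f :: "real \<Rightarrow> complex"
  assumes B: "0 < B" and d: "0 < d" and ab: "a < b" and \<alpha>: "0 \<le> \<alpha>" and \<beta>: "0 \<le> \<beta>"
    and right: "\<And>t. d \<le> t \<Longrightarrow> cmod (f t) = exp (- B * t)"
    and left: "\<And>t. t \<le> -d \<Longrightarrow> cmod (f t) \<le> \<alpha> * exp (B * (t + d)) + \<beta> * exp (- B * (t + d))"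
    and outer: "b \<le> -d \<or> d \<le> a \<or> (a \<le> -d \<and> d \<le> b)"
  shows "cmod (f b) * cmod (f (-a)) \<le> exp (- B * (b - a)) * (1 + exp (- B * d) * (\<alpha> + \<beta>))"
proof -
  have split: "cmod (f l) * exp (- B * r) \<le> exp (- B * (l + r)) * (1 + exp (- B * d) * (\<alpha> + \<beta>))"
    if "l \<le> -d" for l r
  proof -
    have "cmod (f l) * exp (- B * r) \<le> (\<alpha> * exp (B * (l + d)) + \<beta> * exp (- B * (l + d))) * exp (- B * r)"
      using left[OF that] by (intro mult_right_mono) auto
    also have "\<dots> = \<alpha> * exp (B * (l + d) - B * r) + \<beta> * exp (- B * (l + r) - B * d)"
      by (simp add: algebra_simps flip: exp_add)
    also have "\<dots> \<le> \<alpha> * exp (- B * (l + r) - B * d) + \<beta> * exp (- B * (l + r) - B * d)"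
      using that B \<alpha> \<beta> mult_left_mono[of l "-d" B] by (intro add_mono mult_left_mono) (auto simp: algebra_simps)
    also have "\<dots> = exp (- B * (l + r)) * (exp (- B * d) * (\<alpha> + \<beta>))"
    proof -
      have "exp (- B * (l + r) - B * d) = exp (- B * (l + r)) * exp (- B * d)"
        by (subst exp_add[symmetric]) simp
      then show ?thesis by (simp add: algebra_simps)
    qed
    also have "\<dots> \<le> exp (- B * (l + r)) * (1 + exp (- B * d) * (\<alpha> + \<beta>))"
      by (intro mult_left_mono) auto
    finally show ?thesis .
  qed
  consider "b \<le> -d" | "d \<le> a" | "a \<le> -d" "d \<le> b" using outer by blast
  then show ?thesis
  proof cases
    case 1
    then show ?thesis using split[of b "-a"] right[of "-a"] ab by simp
  next
    case 2
    then show ?thesis using split[of "-a" b] right[of b] ab by (simp add: mult.commute)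
  next
    case 3
    have "cmod (f b) * cmod (f (-a)) = exp (- B * (b - a)) * 1"
      using right[of b] right[of "-a"] 3 by (simp add: algebra_simps flip: exp_add)
    also have "\<dots> \<le> exp (- B * (b - a)) * (1 + exp (- B * d) * (\<alpha> + \<beta>))"
      using \<alpha> \<beta> by (intro mult_left_mono) auto
    finally show ?thesis .
  qed
qed

lemma jost_ratio_imaginary_outer_le:
  fixes B d :: real and \<mu> :: complex
  assumes B: "0 < B" and \<mu>: "\<mu> \<noteq> 0" and d: "0 < d" and ab: "a < b"
    and outer: "b \<le> -d \<or> d \<le> a \<or> (a \<le> -d \<and> d \<le> b)"
  defines "T \<equiv> jost_even B \<mu> d * jost_odd B \<mu> d"
  assumes T: "T \<noteq> 0"
  shows "jost_ratio (\<i> * of_real B) \<mu> d a b \<le> exp (- B * (b - a)) *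
     (exp (2 * B * d) / (2 * cmod T)
      + cmod ((of_real B)\<^sup>2 + \<mu>\<^sup>2) * cmod (sin (2 * (\<mu> * of_real d)) / \<mu>) / (4 * B * cmod T) + 1 / (2 * B))"
proof -
  let ?F = "jost (\<i> * of_real B) \<mu> d"
  define E where "E = exp (- B * d)"
  define \<alpha> where "\<alpha> = E * cmod ((of_real B)\<^sup>2 + \<mu>\<^sup>2) * cmod (sin (2 * (\<mu> * of_real d)) / \<mu>) / (2 * B)"
  define \<beta> where "\<beta> = E * cmod T / B"
  have E: "0 < E" "E * exp (B * d) = 1" unfolding E_def by (auto simp flip: exp_add)
  have bound: "cmod (?F b) * cmod (?F (-a)) \<le> exp (- B * (b - a)) * (1 + E * (\<alpha> + \<beta>))"
    unfolding E_def
  proof (rule norm_product_le_outer[OF B d ab _ _ _ _ outer])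
    show "cmod (?F t) = exp (- B * t)" if "d \<le> t" for t
      using jost_imaginary_right[OF d _ that] B by simp
    show "cmod (?F t) \<le> \<alpha> * exp (B * (t + d)) + \<beta> * exp (- B * (t + d))" if "t \<le> -d" for t
    proof -
      let ?X = "of_real (exp (B * (t + d)))
                * (of_real E * ((of_real B)\<^sup>2 + \<mu>\<^sup>2) * sin (2 * (\<mu> * of_real d)) / (2 * of_real B * \<mu>))"
      let ?Y = "of_real (exp (- B * (t + d))) * (- of_real E * jost_even B \<mu> d * jost_odd B \<mu> d / of_real B)"
      have "cmod (?F t) \<le> cmod ?X + cmod ?Y"
        unfolding jost_imaginary_left[OF B \<mu> that] E_def by (rule norm_triangle_ineq)
      also have "cmod ?X = \<alpha> * exp (B * (t + d))"
        unfolding \<alpha>_def using B E by (simp add: norm_mult norm_divide mult_ac)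
      also have "cmod ?Y = \<beta> * exp (- B * (t + d))"
        unfolding \<beta>_def T_def using B E by (simp add: norm_mult norm_divide)
      finally show ?thesis .
    qed
  qed (unfold \<alpha>_def \<beta>_def, use B E in auto)
  have W: "cmod (jost_wronsk (\<i> * of_real B) \<mu> d) = 2 * E\<^sup>2 * cmod T"
    unfolding jost_wronsk_imaginary[OF d] T_def E_def by (simp add: norm_mult norm_power)
  have "0 < cmod T" using T by simp
  have "jost_ratio (\<i> * of_real B) \<mu> d a b \<le> exp (- B * (b - a)) * (1 + E * (\<alpha> + \<beta>)) / (2 * E\<^sup>2 * cmod T)"
    unfolding jost_ratio_def W by (intro divide_right_mono bound) simp
  also have "\<dots> = exp (- B * (b - a)) * ((exp (B * d))\<^sup>2 / (2 * cmod T) + E * \<alpha> / (2 * E\<^sup>2 * cmod T) + 1 / (2 * B))"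
  proof -
    have "E * (E * (exp (B * d) * exp (B * d))) = 1"
      using E(2) by (metis mult.assoc mult.commute mult_1)
    then show ?thesis
      using E B \<open>0 < cmod T\<close> unfolding \<beta>_def by (simp add: field_simps power2_eq_square)
  qed
  also have "\<dots> = exp (- B * (b - a)) * (exp (2 * B * d) / (2 * cmod T)
      + cmod ((of_real B)\<^sup>2 + \<mu>\<^sup>2) * cmod (sin (2 * (\<mu> * of_real d)) / \<mu>) / (4 * B * cmod T) + 1 / (2 * B))"
    using E B \<open>0 < cmod T\<close> unfolding \<alpha>_def by (simp add: field_simps power2_eq_square flip: exp_add)
  finally show ?thesis .
qed

section \<open>Both frequencies imaginary: the regime \<open>\<bar>\<xi>\<bar> > k\<^sub>2\<close>\<close>

lemma cosh_le_exp: "0 \<le> (x::real) \<Longrightarrow> cosh x \<le> exp x"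
  unfolding cosh_field_def by (simp add: order_trans[of _ 1])

lemma half_exp_le_cosh: "exp (x::real) / 2 \<le> cosh x"
  unfolding cosh_field_def by simp

lemma sinh_le_half_exp: "sinh (x::real) \<le> exp x / 2"
  unfolding sinh_field_def by simp

lemma sinh_le_mult_exp:
  assumes "0 \<le> (x::real)"
  shows "sinh x \<le> x * exp x"
proof -
  have "exp x * (1 - 2 * x) \<le> exp x * exp (- 2 * x)"
    using exp_ge_add_one_self[of "- 2 * x"] by (intro mult_left_mono) auto
  also have "exp x * exp (- 2 * x) = exp (- x)" by (simp flip: exp_add)
  finally show ?thesis unfolding sinh_field_def by (simp add: algebra_simps)
qed

lemma jost_even_imaginary:
  "A \<noteq> 0 \<Longrightarrow> jost_even B (\<i> * of_real A) d = of_real (cosh (A * d) + B * sinh (A * d) / A)"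
  unfolding jost_even_def mult.assoc of_real_mult[symmetric] cos_i_times_of_real sin_i_times_of_real
  by simp

lemma jost_odd_imaginary:
  "jost_odd B (\<i> * of_real A) d = of_real (- (A * sinh (A * d) + B * cosh (A * d)))"
proof -
  have arg: "\<i> * of_real A * of_real d = \<i> * complex_of_real (A * d)" by simp
  show ?thesis
    unfolding jost_odd_def arg cos_i_times_of_real sin_i_times_of_real by (simp add: algebra_simps)
qed

lemma jost_imaginary_imaginary_middle:
  assumes "0 < d" "-d \<le> t" "t \<le> d" "A \<noteq> 0"
  shows "jost (\<i> * of_real B) (\<i> * of_real A) d t
           = of_real (exp (- B * d) * (cosh (A * (d - t)) + B * (sinh (A * (d - t)) / A)))"
proof -
  have arg: "\<i> * of_real A * of_real (t - d) = - (\<i> * complex_of_real (A * (d - t)))"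
    by (simp add: algebra_simps)
  show ?thesis
    unfolding jost_imaginary_middle[OF assms(1-3)] arg cos_minus sin_minus cos_i_times_of_real sin_i_times_of_real
    using assms(4) by (simp add: field_simps)
qed

lemma imaginary_even_odd_ge:
  fixes A B d :: real
  assumes A: "0 < A" and AB: "A \<le> B" and d: "0 < d"
  defines "Ev \<equiv> cosh (A * d) + B * sinh (A * d) / A" and "Od \<equiv> A * sinh (A * d) + B * cosh (A * d)"
  shows "exp (A * d) \<le> Ev" "B * sinh (A * d) / A \<le> Ev" "B * exp (A * d) / 2 \<le> Od" "B * cosh (A * d) \<le> Od"
    and "B * exp (2 * A * d) \<le> 2 * (Ev * Od)"
proof -
  have sh: "0 < sinh (A * d)" using A d by simp
  have "sinh (A * d) \<le> B * sinh (A * d) / A" using sh A AB by (simp add: field_simps)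
  then show "exp (A * d) \<le> Ev" unfolding Ev_def using cosh_plus_sinh[of "A * d"] by simp
  show "B * sinh (A * d) / A \<le> Ev" unfolding Ev_def by simp
  show "B * cosh (A * d) \<le> Od" unfolding Od_def using A sh by simp
  moreover have "B * (exp (A * d) / 2) \<le> B * cosh (A * d)"
    using A AB half_exp_le_cosh by (intro mult_left_mono) auto
  ultimately show Od: "B * exp (A * d) / 2 \<le> Od" by simp
  have "B * exp (2 * A * d) = 2 * (exp (A * d) * (B * exp (A * d) / 2))"
    by (simp add: algebra_simps flip: exp_add)
  also have "\<dots> \<le> 2 * (Ev * Od)"
    using Od \<open>exp (A * d) \<le> Ev\<close> A AB order_trans[OF less_imp_le[OF exp_gt_zero] \<open>exp (A * d) \<le> Ev\<close>]
    by (intro mult_left_mono mult_mono) auto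
  finally show "B * exp (2 * A * d) \<le> 2 * (Ev * Od)" .
qed

lemma imaginary_even_odd_product_bounds:
  fixes A B K d :: real
  assumes A: "0 < A" and AB: "A < B" and K: "0 < K" and BK: "B\<^sup>2 - A\<^sup>2 = K\<^sup>2" and d: "0 < d"
  defines "sh \<equiv> sinh (A * d)" and "ch \<equiv> cosh (A * d)"
  defines "Ev \<equiv> ch + B * sh / A" and "Od \<equiv> A * sh + B * ch"
  shows "exp (2 * B * d) / (2 * (Ev * Od)) \<le> exp (2 * K * d) / B"
    and "(B\<^sup>2 - A\<^sup>2) * (2 * sh * ch / A) / (4 * B * (Ev * Od)) \<le> 1 / (2 * B)"
proof -
  have B: "0 < B" using A AB by simp
  note ge = imaginary_even_odd_ge[OF A less_imp_le[OF AB] d, folded sh_def ch_def, folded Ev_def Od_def]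
  have sh: "0 < sh" unfolding sh_def using A d by simp
  have ch: "0 < ch" unfolding ch_def by simp
  have Ev: "0 < Ev" using ge(1) exp_gt_zero[of "A * d"] by linarith
  have Od: "0 < Od" using ge(4) ch B by (smt (verit) mult_pos_pos)
  have BmA: "B - A \<le> K"
  proof -
    have "K \<le> B" using BK A B by (smt (verit) power2_le_imp_le zero_le_power2)
    have "(B - A) * K \<le> (B - A) * (B + A)" using \<open>K \<le> B\<close> A AB by (intro mult_left_mono) auto
    also have "\<dots> = K * K" using BK by (simp add: power2_eq_square algebra_simps)
    finally show ?thesis using K by simp
  qed
  show "exp (2 * B * d) / (2 * (Ev * Od)) \<le> exp (2 * K * d) / B"
  proof -
    have "exp (2 * B * d) / (2 * (Ev * Od)) \<le> exp (2 * B * d) / (B * exp (2 * A * d))"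
      using ge(5) B Ev Od by (intro divide_left_mono) auto
    also have "\<dots> = exp (2 * (B - A) * d) / B" using B by (simp add: exp_diff algebra_simps)
    also have "\<dots> \<le> exp (2 * K * d) / B" using BmA d B by (intro divide_right_mono) auto
    finally show ?thesis .
  qed
  show "(B\<^sup>2 - A\<^sup>2) * (2 * sh * ch / A) / (4 * B * (Ev * Od)) \<le> 1 / (2 * B)"
  proof -
    have "(B\<^sup>2 - A\<^sup>2) * (2 * sh * ch / A) / (4 * B * (Ev * Od))
        \<le> (B\<^sup>2 - A\<^sup>2) * (2 * sh * ch / A) / (4 * B * (B * sh / A * (B * ch)))"
    proof (rule divide_left_mono)
      show "4 * B * (B * sh / A * (B * ch)) \<le> 4 * B * (Ev * Od)"
        using ge sh ch A B Ev by (intro mult_left_mono mult_mono) auto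
      show "0 \<le> (B\<^sup>2 - A\<^sup>2) * (2 * sh * ch / A)"
        using sh ch A AB by (simp add: power_strict_mono less_imp_le)
      show "0 < 4 * B * (Ev * Od) * (4 * B * (B * sh / A * (B * ch)))"
        using sh ch A B Ev Od by simp
    qed
    also have "\<dots> = (B\<^sup>2 - A\<^sup>2) / (2 * B ^ 3)"
      using sh ch A B by (simp add: field_simps power2_eq_square power3_eq_cube)
    also have "\<dots> \<le> B\<^sup>2 / (2 * B ^ 3)" using A B by (intro divide_right_mono) auto
    also have "\<dots> = 1 / (2 * B)" using B by (simp add: field_simps power2_eq_square power3_eq_cube)
    finally show ?thesis .
  qed
qed

lemma jost_ratio_imaginary_imaginary_outer_le:
  fixes A B K d :: real
  assumes A: "0 < A" and AB: "A < B" and K: "0 < K" and BK: "B\<^sup>2 - A\<^sup>2 = K\<^sup>2" and d: "0 < d"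
    and ab: "a < b" and outer: "b \<le> -d \<or> d \<le> a \<or> (a \<le> -d \<and> d \<le> b)"
  shows "jost_ratio (\<i> * of_real B) (\<i> * of_real A) d a b \<le> (exp (2 * K * d) + 1) / B * exp (- B * (b - a))"
proof -
  have B: "0 < B" using A AB by simp
  define sh where "sh = sinh (A * d)"
  define ch where "ch = cosh (A * d)"
  define Ev where "Ev = ch + B * sh / A"
  define Od where "Od = A * sh + B * ch"
  note ge = imaginary_even_odd_ge[OF A less_imp_le[OF AB] d, folded sh_def ch_def, folded Ev_def Od_def]
  note bounds = imaginary_even_odd_product_bounds[OF A AB K BK d, folded sh_def ch_def, folded Ev_def Od_def]
  have ch: "0 < ch" unfolding ch_def by simp
  have Ev: "0 < Ev" using ge(1) exp_gt_zero[of "A * d"] by linarith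
  have Od: "0 < Od" using ge(4) ch B by (smt (verit) mult_pos_pos)
  have "jost_even B (\<i> * of_real A) d = of_real Ev" "jost_odd B (\<i> * of_real A) d = of_real (- Od)"
    unfolding jost_even_imaginary[OF less_imp_neq[OF A, symmetric]] jost_odd_imaginary
      Ev_def Od_def sh_def ch_def by simp_all
  then have T: "cmod (jost_even B (\<i> * of_real A) d * jost_odd B (\<i> * of_real A) d) = Ev * Od"
    using Ev Od by (simp add: norm_mult)
  have sin: "cmod (sin (2 * (\<i> * of_real A * of_real d)) / (\<i> * of_real A)) = 2 * sh * ch / A"
  proof -
    have arg: "2 * (\<i> * of_real A * of_real d) = \<i> * complex_of_real (2 * (A * d))" by simp
    show ?thesis
      unfolding arg sin_i_times_of_real sinh_double sh_def ch_def using A d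
      by (simp add: norm_mult norm_divide)
  qed
  have sq: "cmod ((of_real B)\<^sup>2 + (\<i> * of_real A)\<^sup>2) = B\<^sup>2 - A\<^sup>2"
    using A AB by (simp add: power_mult_distrib flip: of_real_power of_real_diff)
  have "jost_even B (\<i> * of_real A) d * jost_odd B (\<i> * of_real A) d \<noteq> 0"
    using T Ev Od by (metis mult_pos_pos norm_zero order_less_irrefl)
  from jost_ratio_imaginary_outer_le[OF B _ d ab outer this]
  have "jost_ratio (\<i> * of_real B) (\<i> * of_real A) d a b \<le> exp (- B * (b - a)) *
      (exp (2 * B * d) / (2 * (Ev * Od)) + (B\<^sup>2 - A\<^sup>2) * (2 * sh * ch / A) / (4 * B * (Ev * Od)) + 1 / (2 * B))"
    using A unfolding T sin sq by simp
  also have "\<dots> \<le> exp (- B * (b - a)) * (exp (2 * K * d) / B + 1 / (2 * B) + 1 / (2 * B))"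
    using bounds by (intro mult_left_mono add_mono) auto
  also have "\<dots> = (exp (2 * K * d) + 1) / B * exp (- B * (b - a))"
    using B by (simp add: field_simps)
  finally show ?thesis .
qed

text \<open>If \<open>K \<le> A\<close> then \<open>B \<le> 2 A\<close>; otherwise \<open>B \<le> 2 K\<close> and \<open>sinh (A \<tau>) / A \<le> \<tau> e\<^sup>A\<^sup>\<tau>\<close>.\<close>
lemma mult_sinh_div_le:
  fixes A B K d \<tau> :: real
  assumes A: "0 < A" and B: "0 < B" and K: "0 < K" and BK: "B\<^sup>2 - A\<^sup>2 = K\<^sup>2"
    and \<tau>: "0 \<le> \<tau>" "\<tau> \<le> 2 * d"
  shows "B * (sinh (A * \<tau>) / A) \<le> (1 + 4 * K * d) * exp (A * \<tau>)"
proof -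
  have sh: "0 \<le> sinh (A * \<tau>)" using A \<tau> by simp
  show ?thesis
  proof (cases "K \<le> A")
    case True
    have "K * K \<le> A * A" using True K by (intro mult_mono) auto
    then have "B\<^sup>2 \<le> (2 * A)\<^sup>2" using BK zero_le_square[of A] unfolding power2_eq_square by linarith
    then have B2: "B \<le> 2 * A" by (rule power2_le_imp_le) (use A in simp)
    have "B * (sinh (A * \<tau>) / A) \<le> (2 * A) * ((exp (A * \<tau>) / 2) / A)"
      using B2 sinh_le_half_exp[of "A * \<tau>"] A sh by (intro mult_mono divide_right_mono) auto
    also have "\<dots> = exp (A * \<tau>)" using A by simp
    also have "\<dots> \<le> (1 + 4 * K * d) * exp (A * \<tau>)" using K \<tau> by simp
    finally show ?thesis .
  next
    case False
    have "A * A \<le> K * K" using False A by (intro mult_mono) auto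
    then have "B\<^sup>2 \<le> (2 * K)\<^sup>2" using BK zero_le_square[of K] unfolding power2_eq_square by linarith
    then have B2: "B \<le> 2 * K" by (rule power2_le_imp_le) (use K in simp)
    have "sinh (A * \<tau>) / A \<le> \<tau> * exp (A * \<tau>)"
      using sinh_le_mult_exp[of "A * \<tau>"] A \<tau> by (simp add: divide_le_eq mult_ac)
    also have "\<dots> \<le> (2 * d) * exp (A * \<tau>)" using \<tau> by (intro mult_right_mono) auto
    finally have "B * (sinh (A * \<tau>) / A) \<le> (2 * K) * ((2 * d) * exp (A * \<tau>))"
      using B2 B sh A by (intro mult_mono) auto
    also have "\<dots> \<le> (1 + 4 * K * d) * exp (A * \<tau>)" by (simp add: algebra_simps)
    finally show ?thesis .
  qed
qed

lemma norm_jost_imaginary_imaginary_middle_le: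
  fixes A B K d :: real
  assumes A: "0 < A" and AB: "A < B" and K: "0 < K" and BK: "B\<^sup>2 - A\<^sup>2 = K\<^sup>2" and d: "0 < d"
    and t: "-d \<le> t" "t \<le> d"
  shows "cmod (jost (\<i> * of_real B) (\<i> * of_real A) d t) \<le> exp (- B * d) * (2 + 4 * K * d) * exp (A * (d - t))"
proof -
  have "cosh (A * (d - t)) + B * (sinh (A * (d - t)) / A) \<le> exp (A * (d - t)) + (1 + 4 * K * d) * exp (A * (d - t))"
    using cosh_le_exp[of "A * (d - t)"] mult_sinh_div_le[OF A _ K BK, of "d - t" d] A AB t
    by (intro add_mono) auto
  from mult_left_mono[OF this, of "exp (- B * d)"]
  have "exp (- B * d) * (cosh (A * (d - t)) + B * (sinh (A * (d - t)) / A))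
      \<le> exp (- B * d) * (2 + 4 * K * d) * exp (A * (d - t))"
    by (simp add: algebra_simps)
  moreover have "0 \<le> sinh (A * (d - t))" using A t by simp
  ultimately show ?thesis
    unfolding jost_imaginary_imaginary_middle[OF d t less_imp_neq[OF A, symmetric]] norm_of_real
    using A AB by (simp add: abs_of_nonneg)
qed

lemma norm_product_le_inner_growing:
  fixes f :: "real \<Rightarrow> complex"
  assumes A: "0 < A" and AB: "A \<le> B" and d: "0 < d" and ab: "a < b" and G: "1 \<le> \<Gamma>"
    and right: "\<And>t. d \<le> t \<Longrightarrow> cmod (f t) = exp (- B * t)"
    and middle: "\<And>t. -d \<le> t \<Longrightarrow> t \<le> d \<Longrightarrow> cmod (f t) \<le> exp (- B * d) * \<Gamma> * exp (A * (d - t))"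
    and inner: "\<not> (b \<le> -d \<or> d \<le> a \<or> (a \<le> -d \<and> d \<le> b))"
  shows "cmod (f b) * cmod (f (-a)) \<le> exp (- 2 * (B - A) * d) * \<Gamma>\<^sup>2 * exp (- A * (b - a))"
proof -
  have GG: "\<Gamma> \<le> \<Gamma>\<^sup>2" using G by (simp add: power2_eq_square)
  consider "a \<le> -d" "b < d" | "-d < a" "d \<le> b" | "-d < a" "b < d" using inner by linarith
  then show ?thesis
  proof cases
    case 1
    have "cmod (f b) * cmod (f (-a)) \<le> (exp (- B * d) * \<Gamma> * exp (A * (d - b))) * exp (B * a)"
      using right[of "-a"] middle[of b] 1 inner G by (intro mult_mono) auto
    also have "\<dots> = \<Gamma> * exp (- B * d + A * (d - b) + B * a)" by (simp add: algebra_simps flip: exp_add)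
    also have "\<dots> \<le> \<Gamma>\<^sup>2 * exp (- 2 * (B - A) * d - A * (b - a))"
    proof (intro mult_mono GG)
      have "(B - A) * (a + d) \<le> 0" using 1 AB by (intro mult_nonneg_nonpos) auto
      then show "exp (- B * d + A * (d - b) + B * a) \<le> exp (- 2 * (B - A) * d - A * (b - a))"
        using 1 AB A mult_left_mono[of b d A] by (simp add: algebra_simps)
    qed (use G in auto)
    finally show ?thesis by (simp add: exp_diff exp_add[symmetric] algebra_simps)
  next
    case 2
    have "cmod (f b) * cmod (f (-a)) \<le> exp (- B * b) * (exp (- B * d) * \<Gamma> * exp (A * (d + a)))"
      using right[of b] middle[of "-a"] 2 inner G by (intro mult_mono) auto
    also have "\<dots> = \<Gamma> * exp (- B * b - B * d + A * (d + a))" by (simp add: algebra_simps flip: exp_add)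
    also have "\<dots> \<le> \<Gamma>\<^sup>2 * exp (- 2 * (B - A) * d - A * (b - a))"
    proof (intro mult_mono GG)
      have "0 \<le> (B - A) * (b - d)" using 2 AB by (intro mult_nonneg_nonneg) auto
      then show "exp (- B * b - B * d + A * (d + a)) \<le> exp (- 2 * (B - A) * d - A * (b - a))"
        using 2 AB A mult_left_mono[of "-d" a A] by (simp add: algebra_simps)
    qed (use G in auto)
    finally show ?thesis by (simp add: exp_diff exp_add[symmetric] algebra_simps)
  next
    case 3
    have "cmod (f b) * cmod (f (-a))
        \<le> (exp (- B * d) * \<Gamma> * exp (A * (d - b))) * (exp (- B * d) * \<Gamma> * exp (A * (d + a)))"
      using middle[of b] middle[of "-a"] 3 inner ab G by (intro mult_mono) auto
    also have "\<dots> = exp (- 2 * (B - A) * d) * \<Gamma>\<^sup>2 * exp (- A * (b - a))"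
      by (simp add: algebra_simps power2_eq_square flip: exp_add)
    finally show ?thesis .
  qed
qed

lemma jost_ratio_imaginary_imaginary_inner_le:
  fixes A B K d :: real
  assumes A: "0 < A" and AB: "A < B" and K: "0 < K" and BK: "B\<^sup>2 - A\<^sup>2 = K\<^sup>2" and d: "0 < d"
    and ab: "a < b" and inner: "\<not> (b \<le> -d \<or> d \<le> a \<or> (a \<le> -d \<and> d \<le> b))"
  shows "jost_ratio (\<i> * of_real B) (\<i> * of_real A) d a b \<le> (2 + 4 * K * d)\<^sup>2 / B * exp (- A * (b - a))"
proof -
  have B: "0 < B" using A AB by simp
  define Ev where "Ev = cosh (A * d) + B * sinh (A * d) / A"
  define Od where "Od = A * sinh (A * d) + B * cosh (A * d)"
  note ge = imaginary_even_odd_ge[OF A less_imp_le[OF AB] d, folded Ev_def Od_def]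
  have Ev: "0 < Ev" using ge(1) exp_gt_zero[of "A * d"] by linarith
  have Od: "0 < Od" using ge(4) B by (smt (verit) mult_pos_pos cosh_real_pos)
  define L where "L = B * exp (- 2 * (B - A) * d)"
  have "L = (exp (- B * d))\<^sup>2 * (B * exp (2 * A * d))"
    unfolding L_def by (simp add: algebra_simps power2_eq_square flip: exp_add)
  also have "\<dots> \<le> (exp (- B * d))\<^sup>2 * (2 * (Ev * Od))" using ge(5) by (intro mult_left_mono) auto
  also have "\<dots> = cmod (jost_wronsk (\<i> * of_real B) (\<i> * of_real A) d)"
    unfolding jost_wronsk_imaginary[OF d] jost_even_imaginary[OF less_imp_neq[OF A, symmetric]]
      jost_odd_imaginary Ev_def[symmetric] Od_def[symmetric]
    using Ev Od by (simp add: norm_mult norm_power)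
  finally have W: "L \<le> cmod (jost_wronsk (\<i> * of_real B) (\<i> * of_real A) d)" .
  have prod: "cmod (jost (\<i> * of_real B) (\<i> * of_real A) d b) * cmod (jost (\<i> * of_real B) (\<i> * of_real A) d (-a))
      \<le> exp (- 2 * (B - A) * d) * (2 + 4 * K * d)\<^sup>2 * exp (- A * (b - a))"
    using A AB d ab K inner jost_imaginary_right[OF d] norm_jost_imaginary_imaginary_middle_le[OF A AB K BK d]
    by (intro norm_product_le_inner_growing[where B=B]) auto
  have "jost_ratio (\<i> * of_real B) (\<i> * of_real A) d a b
      \<le> exp (- 2 * (B - A) * d) * (2 + 4 * K * d)\<^sup>2 * exp (- A * (b - a)) / L"
    unfolding jost_ratio_def using W B by (intro frac_le[OF _ prod]) (auto simp: L_def)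
  also have "\<dots> = (2 + 4 * K * d)\<^sup>2 / B * exp (- A * (b - a))"
    unfolding L_def using B by simp
  finally show ?thesis .
qed

lemma jost_ratio_imaginary_imaginary_le:
  fixes A B K d :: real
  assumes A: "0 < A" and AB: "A < B" and K: "0 < K" and BK: "B\<^sup>2 - A\<^sup>2 = K\<^sup>2" and d: "0 < d"
    and ab: "a < b"
  defines "C \<equiv> max (exp (2 * K * d) + 1) ((2 + 4 * K * d)\<^sup>2)"
  shows "jost_ratio (\<i> * of_real B) (\<i> * of_real A) d a b \<le> C / B * exp (- A * (b - a))"
    and "b \<le> -d \<or> d \<le> a \<or> (a \<le> -d \<and> d \<le> b) \<Longrightarrow>
           jost_ratio (\<i> * of_real B) (\<i> * of_real A) d a b \<le> C / B * exp (- B * (b - a))"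
proof -
  have B: "0 < B" using A AB by simp
  have C: "0 \<le> C / B" unfolding C_def using B by (simp add: le_max_iff_disj)
  show outer: "jost_ratio (\<i> * of_real B) (\<i> * of_real A) d a b \<le> C / B * exp (- B * (b - a))"
    if "b \<le> -d \<or> d \<le> a \<or> (a \<le> -d \<and> d \<le> b)"
    using jost_ratio_imaginary_imaginary_outer_le[OF A AB K BK d ab that] B
    unfolding C_def by (smt (verit) divide_right_mono exp_gt_zero max.cobounded1 mult_right_mono)
  have "exp (- B * (b - a)) \<le> exp (- A * (b - a))" using AB ab by (simp add: mult_right_mono)
  then have "C / B * exp (- B * (b - a)) \<le> C / B * exp (- A * (b - a))"
    using C by (intro mult_left_mono)
  moreover have "jost_ratio (\<i> * of_real B) (\<i> * of_real A) d a b \<le> C / B * exp (- A * (b - a))"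
    if "\<not> (b \<le> -d \<or> d \<le> a \<or> (a \<le> -d \<and> d \<le> b))"
    using jost_ratio_imaginary_imaginary_inner_le[OF A AB K BK d ab that] B
    unfolding C_def by (smt (verit) divide_right_mono exp_gt_zero max.cobounded2 mult_right_mono)
  ultimately show "jost_ratio (\<i> * of_real B) (\<i> * of_real A) d a b \<le> C / B * exp (- A * (b - a))"
    using outer by fastforce
qed

section \<open>Imaginary outer, real inner frequency: the regime \<open>k\<^sub>1 < \<bar>\<xi>\<bar> < k\<^sub>2\<close>\<close>

lemma jost_even_of_real:
  "jost_even B (of_real m) d = of_real (cos (m * d) + B * sin (m * d) / m)"
  unfolding jost_even_def of_real_mult[symmetric] cos_of_real sin_of_real by simp

lemma jost_odd_of_real:
  "jost_odd B (of_real m) d = of_real (m * sin (m * d) - B * cos (m * d))"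
  unfolding jost_odd_def of_real_mult[symmetric] cos_of_real sin_of_real by simp

lemma norm_jost_imaginary_real_middle_le:
  assumes B: "0 < B" and m: "0 < m" and d: "0 < d" and t: "-d \<le> t" "t \<le> d"
  shows "cmod (jost (\<i> * of_real B) (of_real m) d t) \<le> exp (- B * d) * (1 + 2 * B * d)"
proof -
  have eq: "jost (\<i> * of_real B) (of_real m) d t
      = of_real (exp (- B * d) * (cos (m * (t - d)) - B * (sin (m * (t - d)) / m)))"
    unfolding jost_imaginary_middle[OF d t] of_real_mult[symmetric] cos_of_real sin_of_real
      of_real_divide[symmetric] of_real_diff[symmetric]
    by (rule refl)
  have bound: "\<bar>cos (m * (t - d)) - B * (sin (m * (t - d)) / m)\<bar> \<le> 1 + B * (2 * d)"
  proof -
    have "\<bar>cos (m * (t - d)) - B * (sin (m * (t - d)) / m)\<bar> \<le> \<bar>cos (m * (t - d))\<bar> + B * \<bar>sin (m * (t - d)) / m\<bar>"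
      using B abs_triangle_ineq4[of "cos (m * (t - d))" "B * (sin (m * (t - d)) / m)"] by (simp add: abs_mult)
    also have "\<dots> \<le> 1 + B * (2 * d)"
      using abs_sin_mult_div_le[OF m, of "t - d"] t B by (intro add_mono mult_left_mono) auto
    finally show ?thesis .
  qed
  have "cmod (jost (\<i> * of_real B) (of_real m) d t)
      = exp (- B * d) * \<bar>cos (m * (t - d)) - B * (sin (m * (t - d)) / m)\<bar>"
    unfolding eq norm_of_real by (simp add: abs_mult)
  also have "\<dots> \<le> exp (- B * d) * (1 + B * (2 * d))" using bound by (intro mult_left_mono) auto
  finally show ?thesis by (simp add: mult_ac)
qed

lemma norm_product_le_inner:
  fixes f :: "real \<Rightarrow> complex"
  assumes B: "0 < B" and d: "0 < d" and ab: "a < b" and G: "1 \<le> \<Gamma>"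
    and right: "\<And>t. d \<le> t \<Longrightarrow> cmod (f t) = exp (- B * t)"
    and middle: "\<And>t. -d \<le> t \<Longrightarrow> t \<le> d \<Longrightarrow> cmod (f t) \<le> exp (- B * d) * \<Gamma>"
    and inner: "\<not> (b \<le> -d \<or> d \<le> a \<or> (a \<le> -d \<and> d \<le> b))"
  shows "cmod (f b) * cmod (f (-a)) \<le> exp (- B * (b - a)) * \<Gamma>\<^sup>2"
proof -
  have GG: "\<Gamma> \<le> \<Gamma>\<^sup>2" using G by (simp add: power2_eq_square)
  consider "a \<le> -d" "b < d" | "-d < a" "d \<le> b" | "-d < a" "b < d" using inner by linarith
  then show ?thesis
  proof cases
    case 1
    have "cmod (f b) * cmod (f (-a)) \<le> (exp (- B * d) * \<Gamma>) * exp (B * a)"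
      using right[of "-a"] middle[of b] 1 inner G by (intro mult_mono) auto
    also have "\<dots> = exp (B * (a - d)) * \<Gamma>" by (simp add: algebra_simps flip: exp_add)
    also have "\<dots> \<le> exp (- B * (b - a)) * \<Gamma>\<^sup>2"
      using 1 B G GG mult_left_mono[of b d B] by (intro mult_mono) (auto simp: algebra_simps)
    finally show ?thesis .
  next
    case 2
    have "cmod (f b) * cmod (f (-a)) \<le> exp (- B * b) * (exp (- B * d) * \<Gamma>)"
      using right[of b] middle[of "-a"] 2 inner by (intro mult_mono) auto
    also have "\<dots> = exp (- B * (b + d)) * \<Gamma>" by (simp add: algebra_simps flip: exp_add)
    also have "\<dots> \<le> exp (- B * (b - a)) * \<Gamma>\<^sup>2"
      using 2 B G GG mult_left_mono[of "-d" a B] by (intro mult_mono) (auto simp: algebra_simps)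
    finally show ?thesis .
  next
    case 3
    have "cmod (f b) * cmod (f (-a)) \<le> (exp (- B * d) * \<Gamma>) * (exp (- B * d) * \<Gamma>)"
      using middle[of b] middle[of "-a"] 3 inner ab G by (intro mult_mono) auto
    also have "\<dots> = exp (- B * (2 * d)) * \<Gamma>\<^sup>2" by (simp add: algebra_simps power2_eq_square flip: exp_add)
    also have "\<dots> \<le> exp (- B * (b - a)) * \<Gamma>\<^sup>2"
      using 3 B G mult_left_mono[of "b - a" "2 * d" B] by (intro mult_right_mono) (auto simp: algebra_simps)
    finally show ?thesis .
  qed
qed

lemma jost_ratio_imaginary_real_le:
  fixes B m d :: real
  assumes B: "0 < B" and m: "0 < m" and d: "0 < d" and ab: "a < b"
  defines "T \<equiv> (cos (m * d) + B * sin (m * d) / m) * (m * sin (m * d) - B * cos (m * d))"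
  assumes T: "T \<noteq> 0"
  shows "jost_ratio (\<i> * of_real B) (of_real m) d a b \<le> exp (- B * (b - a)) *
     ((1 + 2 * B * d)\<^sup>2 * exp (2 * B * d) / (2 * \<bar>T\<bar>)
      + (B\<^sup>2 + m\<^sup>2) * \<bar>sin (2 * m * d) / m\<bar> / (4 * B * \<bar>T\<bar>) + 1 / (2 * B))"
proof -
  have T_eq: "jost_even B (of_real m) d * jost_odd B (of_real m) d = of_real T"
    unfolding jost_even_of_real jost_odd_of_real T_def by simp
  have W: "cmod (jost_wronsk (\<i> * of_real B) (of_real m) d) = 2 * (exp (- B * d))\<^sup>2 * \<bar>T\<bar>"
    unfolding jost_wronsk_imaginary[OF d] mult.assoc[of _ "jost_even B (of_real m) d"] T_eq
    by (simp add: norm_mult norm_power)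
  have G: "exp (2 * B * d) \<le> (1 + 2 * B * d)\<^sup>2 * exp (2 * B * d)"
    using B d by (simp add: one_le_power)
  show ?thesis
  proof (cases "b \<le> -d \<or> d \<le> a \<or> (a \<le> -d \<and> d \<le> b)")
    case True
    have arg: "2 * (of_real m * of_real d) = (of_real (2 * m * d) :: complex)" by simp
    have sin: "cmod (sin (2 * (of_real m * of_real d)) / of_real m) = \<bar>sin (2 * m * d) / m\<bar>"
      unfolding arg sin_of_real of_real_divide[symmetric] norm_of_real ..
    have sq: "cmod ((of_real B)\<^sup>2 + (of_real m)\<^sup>2) = B\<^sup>2 + m\<^sup>2"
      by (simp flip: of_real_power of_real_add)
    have "complex_of_real m \<noteq> 0" "jost_even B (of_real m) d * jost_odd B (of_real m) d \<noteq> 0"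
      using m T unfolding T_eq by simp_all
    from jost_ratio_imaginary_outer_le[OF B this(1) d ab True this(2)]
    have "jost_ratio (\<i> * of_real B) (of_real m) d a b \<le> exp (- B * (b - a)) *
       (exp (2 * B * d) / (2 * \<bar>T\<bar>) + (B\<^sup>2 + m\<^sup>2) * \<bar>sin (2 * m * d) / m\<bar> / (4 * B * \<bar>T\<bar>) + 1 / (2 * B))"
      unfolding T_eq sin sq norm_of_real .
    also have "\<dots> \<le> exp (- B * (b - a)) * ((1 + 2 * B * d)\<^sup>2 * exp (2 * B * d) / (2 * \<bar>T\<bar>)
      + (B\<^sup>2 + m\<^sup>2) * \<bar>sin (2 * m * d) / m\<bar> / (4 * B * \<bar>T\<bar>) + 1 / (2 * B))"
      using G T B by (intro mult_left_mono add_mono divide_right_mono) auto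
    finally show ?thesis .
  next
    case False
    have "cmod (jost (\<i> * of_real B) (of_real m) d b) * cmod (jost (\<i> * of_real B) (of_real m) d (-a))
        \<le> exp (- B * (b - a)) * (1 + 2 * B * d)\<^sup>2"
      using B d ab False jost_imaginary_right[OF d] norm_jost_imaginary_real_middle_le[OF B m d]
      by (intro norm_product_le_inner) auto
    then have "jost_ratio (\<i> * of_real B) (of_real m) d a b
        \<le> exp (- B * (b - a)) * (1 + 2 * B * d)\<^sup>2 / (2 * (exp (- B * d))\<^sup>2 * \<bar>T\<bar>)"
      unfolding jost_ratio_def W by (rule divide_right_mono) simp
    also have "\<dots> = exp (- B * (b - a)) * ((1 + 2 * B * d)\<^sup>2 * exp (2 * B * d) / (2 * \<bar>T\<bar>))"
    proof -
      have "(exp (- B * d))\<^sup>2 * exp (2 * B * d) = 1"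
        by (simp add: power2_eq_square algebra_simps flip: exp_add)
      then have "(exp (- B * d))\<^sup>2 = 1 / exp (2 * B * d)" by (simp add: field_simps)
      then show ?thesis by simp
    qed
    also have "\<dots> \<le> exp (- B * (b - a)) * ((1 + 2 * B * d)\<^sup>2 * exp (2 * B * d) / (2 * \<bar>T\<bar>)
      + (B\<^sup>2 + m\<^sup>2) * \<bar>sin (2 * m * d) / m\<bar> / (4 * B * \<bar>T\<bar>) + 1 / (2 * B))"
      using B by (intro mult_left_mono) auto
    finally show ?thesis .
  qed
qed

section \<open>Lower bounds near simple zeros\<close>

lemma has_real_derivative_imp_local_lower_bound:
  fixes T :: "real \<Rightarrow> real"
  assumes "(T has_real_derivative D) (at z)" "D \<noteq> 0" "T z = 0"
  shows "\<exists>e>0. \<exists>c>0. \<forall>x. \<bar>x - z\<bar> < e \<longrightarrow> c * \<bar>x - z\<bar> \<le> \<bar>T x\<bar>"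
proof -
  have "((\<lambda>y. (T y - T z) / (y - z)) \<longlongrightarrow> D) (at z)"
    using assms(1) has_field_derivative_iff by blast
  then have "eventually (\<lambda>y. dist ((T y - T z) / (y - z)) D < \<bar>D\<bar> / 2) (at z)"
    using assms(2) by (intro tendstoD) auto
  then obtain e where e: "e > 0"
    and he: "\<And>y. y \<noteq> z \<Longrightarrow> dist y z < e \<Longrightarrow> dist ((T y - T z) / (y - z)) D < \<bar>D\<bar> / 2"
    unfolding eventually_at by auto
  have "\<bar>D\<bar> / 2 * \<bar>x - z\<bar> \<le> \<bar>T x\<bar>" if x: "\<bar>x - z\<bar> < e" for x
  proof (cases "x = z")
    case False
    have "\<bar>T x / (x - z) - D\<bar> < \<bar>D\<bar> / 2" using he[OF False] x assms(3) by (simp add: dist_real_def)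
    then have "\<bar>D\<bar> / 2 \<le> \<bar>T x / (x - z)\<bar>" by linarith
    then have "\<bar>D\<bar> / 2 * \<bar>x - z\<bar> \<le> \<bar>T x / (x - z)\<bar> * \<bar>x - z\<bar>" by (intro mult_right_mono) auto
    also have "\<dots> = \<bar>T x\<bar>" using False by (simp add: abs_divide)
    finally show ?thesis .
  qed simp
  moreover have "0 < \<bar>D\<bar> / 2" using assms(2) by simp
  ultimately show ?thesis using e by blast
qed

lemma simple_zeros_finite:
  fixes T :: "real \<Rightarrow> real"
  assumes cont: "continuous_on {a..b} T"
    and simple: "\<And>z. z \<in> {a..b} \<Longrightarrow> T z = 0 \<Longrightarrow> \<exists>D. D \<noteq> 0 \<and> (T has_real_derivative D) (at z)"
  shows "finite {z\<in>{a..b}. T z = 0}"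
proof (rule ccontr)
  define Z where "Z = {z\<in>{a..b}. T z = 0}"
  assume "infinite {z\<in>{a..b}. T z = 0}"
  moreover have "Z \<subseteq> {a..b}" unfolding Z_def by auto
  ultimately obtain x where x: "x \<in> {a..b}" "x islimpt Z"
    using Heine_Borel_imp_Bolzano_Weierstrass[OF compact_Icc] unfolding Z_def by blast
  have "closed ({a..b} \<inter> T -` {0})" by (rule continuous_closed_preimage[OF cont]) auto
  moreover have "Z = {a..b} \<inter> T -` {0}" unfolding Z_def by auto
  ultimately have "x \<in> Z" using x closed_limpt by blast
  then obtain e c where e: "e > 0" "c > 0" and lower: "\<And>y. \<bar>y - x\<bar> < e \<Longrightarrow> c * \<bar>y - x\<bar> \<le> \<bar>T y\<bar>"
    using simple has_real_derivative_imp_local_lower_bound unfolding Z_def by blast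
  obtain y where "y \<in> Z" "y \<noteq> x" "dist y x < e"
    using x(2) e(1) unfolding islimpt_approachable by blast
  then have "0 < c * \<bar>y - x\<bar>" "c * \<bar>y - x\<bar> \<le> \<bar>T y\<bar>" "T y = 0"
    using lower[of y] e(2) unfolding Z_def by (auto simp: dist_real_def)
  then show False by simp
qed

lemma compact_nonvanishing_ge:
  fixes f :: "real \<Rightarrow> real"
  assumes "compact S" "continuous_on S f" "\<And>x. x \<in> S \<Longrightarrow> f x \<noteq> 0"
  obtains m where "0 < m" "\<And>x. x \<in> S \<Longrightarrow> m \<le> \<bar>f x\<bar>"
proof (cases "S = {}")
  case False
  have "continuous_on S (\<lambda>x. \<bar>f x\<bar>)" using assms(2) by (intro continuous_intros)
  then obtain x0 where "x0 \<in> S" "\<And>y. y \<in> S \<Longrightarrow> \<bar>f x0\<bar> \<le> \<bar>f y\<bar>"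
    using continuous_attains_inf[OF assms(1) False] by blast
  then show ?thesis using that[of "\<bar>f x0\<bar>"] assms(3) by auto
qed (use that[of 1] in auto)

text \<open>Each simple zero \<open>z\<close> has a neighbourhood where \<open>\<bar>T x\<bar> \<ge> c\<^sub>z \<bar>x - z\<bar>\<close>; on the compact rest of
  \<open>[a, b]\<close> the function \<open>\<bar>T\<bar>\<close> has a positive minimum.\<close>
lemma simple_zeros_product_le:
  fixes T :: "real \<Rightarrow> real"
  assumes cont: "continuous_on {a..b} T"
    and simple: "\<And>z. z \<in> {a..b} \<Longrightarrow> T z = 0 \<Longrightarrow> \<exists>D. D \<noteq> 0 \<and> (T has_real_derivative D) (at z)"
  shows "\<exists>c>0. \<forall>x\<in>{a..b}. c * (\<Prod>z\<in>{z\<in>{a..b}. T z = 0}. \<bar>x - z\<bar>) \<le> \<bar>T x\<bar>"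
proof -
  define Z where "Z = {z\<in>{a..b}. T z = 0}"
  have finZ: "finite Z" unfolding Z_def by (rule simple_zeros_finite[OF cont simple])
  have "\<forall>z\<in>Z. \<exists>e>0. \<exists>c>0. \<forall>x. \<bar>x - z\<bar> < e \<longrightarrow> c * \<bar>x - z\<bar> \<le> \<bar>T x\<bar>"
    using simple has_real_derivative_imp_local_lower_bound unfolding Z_def by blast
  then obtain e c where ec: "\<And>z. z \<in> Z \<Longrightarrow> e z > 0 \<and> c z > 0 \<and> (\<forall>x. \<bar>x - z\<bar> < e z \<longrightarrow> c z * \<bar>x - z\<bar> \<le> \<bar>T x\<bar>)"
    by metis
  define S where "S = {a..b} - (\<Union>z\<in>Z. ball z (e z))"
  have S_nonzero: "T x \<noteq> 0" if "x \<in> S" for x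
  proof
    assume "T x = 0"
    then have "x \<in> Z" using that unfolding S_def Z_def by auto
    then have "x \<in> ball x (e x)" using ec by auto
    then show False using that \<open>x \<in> Z\<close> unfolding S_def by blast
  qed
  have "compact S" unfolding S_def by (intro compact_diff compact_Icc open_UN) auto
  moreover have "continuous_on S T" by (rule continuous_on_subset[OF cont]) (auto simp: S_def)
  ultimately obtain m where m: "m > 0" "\<And>x. x \<in> S \<Longrightarrow> m \<le> \<bar>T x\<bar>"
    using compact_nonvanishing_ge S_nonzero by blast
  define c0 where "c0 = Min (insert m (c ` Z))"
  have c0: "0 < c0" unfolding c0_def using finZ m ec by (subst Min_gr_iff) auto
  have c0_le: "c0 \<le> m" "\<And>z. z \<in> Z \<Longrightarrow> c0 \<le> c z" unfolding c0_def using finZ by auto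
  define M where "M = max 1 (b - a) ^ card Z"
  have M: "(\<Prod>z\<in>Z'. \<bar>x - z\<bar>) \<le> M" if "Z' \<subseteq> Z" "x \<in> {a..b}" for Z' x
  proof -
    have "(\<Prod>z\<in>Z'. \<bar>x - z\<bar>) \<le> (\<Prod>z\<in>Z'. max 1 (b - a))"
    proof (rule prod_mono)
      show "0 \<le> \<bar>x - z\<bar> \<and> \<bar>x - z\<bar> \<le> max 1 (b - a)" if "z \<in> Z'" for z
        using that \<open>Z' \<subseteq> Z\<close> \<open>x \<in> {a..b}\<close> unfolding Z_def by auto
    qed
    also have "\<dots> = max 1 (b - a) ^ card Z'" by simp
    also have "\<dots> \<le> M"
      unfolding M_def using card_mono[OF finZ that(1)] by (intro power_increasing) auto
    finally show ?thesis .
  qed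
  have M1: "1 \<le> M" unfolding M_def by simp
  have "c0 / M * (\<Prod>z\<in>Z. \<bar>x - z\<bar>) \<le> \<bar>T x\<bar>" if x: "x \<in> {a..b}" for x
  proof (cases "x \<in> S")
    case True
    have "c0 / M * (\<Prod>z\<in>Z. \<bar>x - z\<bar>) \<le> c0 / M * M" using M[of Z x] x c0 M1 by (intro mult_left_mono) auto
    also have "\<dots> \<le> \<bar>T x\<bar>" using M1 c0_le(1) m(2)[OF True] by simp
    finally show ?thesis .
  next
    case False
    then obtain z where z: "z \<in> Z" "\<bar>x - z\<bar> < e z" using x unfolding S_def by (auto simp: dist_real_def)
    have "(\<Prod>z\<in>Z. \<bar>x - z\<bar>) = \<bar>x - z\<bar> * (\<Prod>w\<in>Z - {z}. \<bar>x - w\<bar>)"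
      using finZ z(1) by (simp add: prod.remove)
    also have "\<dots> \<le> \<bar>x - z\<bar> * M" using M[of "Z - {z}" x] x by (intro mult_left_mono) auto
    finally have "c0 / M * (\<Prod>z\<in>Z. \<bar>x - z\<bar>) \<le> c0 / M * (\<bar>x - z\<bar> * M)"
      using c0 M1 by (intro mult_left_mono) auto
    also have "\<dots> = c0 * \<bar>x - z\<bar>" using M1 by simp
    also have "\<dots> \<le> c z * \<bar>x - z\<bar>" using c0_le(2)[OF z(1)] by (intro mult_right_mono) auto
    also have "\<dots> \<le> \<bar>T x\<bar>" using ec[OF z(1)] z(2) by blast
    finally show ?thesis .
  qed
  then show ?thesis using c0 M1 unfolding Z_def by (intro exI[of _ "c0 / M"]) auto
qed

section \<open>The Wronskian between the thresholds\<close>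

text \<open>For \<open>k\<^sub>1 < \<bar>\<xi>\<bar> < k\<^sub>2\<close>, with \<open>K = \<surd>(k\<^sub>2\<^sup>2 - k\<^sub>1\<^sup>2)\<close> and \<open>B = \<surd>(\<xi>\<^sup>2 - k\<^sub>1\<^sup>2)\<close>, the inner frequency is
  \<open>mid_freq K B = \<surd>(k\<^sub>2\<^sup>2 - \<xi>\<^sup>2)\<close> and the Wronskian is \<open>2 e\<^sup>-\<^sup>2\<^sup>B\<^sup>d mid_wronsk K d B\<close>.\<close>
definition mid_freq :: "real \<Rightarrow> real \<Rightarrow> real" where
  "mid_freq K B = sqrt (K\<^sup>2 - B\<^sup>2)"

definition even_mode :: "real \<Rightarrow> real \<Rightarrow> real \<Rightarrow> real" where
  "even_mode K d B = mid_freq K B * cos (mid_freq K B * d) + B * sin (mid_freq K B * d)"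

definition odd_mode :: "real \<Rightarrow> real \<Rightarrow> real \<Rightarrow> real" where
  "odd_mode K d B = mid_freq K B * sin (mid_freq K B * d) - B * cos (mid_freq K B * d)"

definition mid_wronsk :: "real \<Rightarrow> real \<Rightarrow> real \<Rightarrow> real" where
  "mid_wronsk K d B = even_mode K d B * odd_mode K d B / mid_freq K B"

lemma mid_freq_pos: "\<bar>B\<bar> < K \<Longrightarrow> 0 < mid_freq K B"
  unfolding mid_freq_def using abs_less_square_iff[of B K] by simp

lemma mid_freq_squared: "\<bar>B\<bar> < K \<Longrightarrow> (mid_freq K B)\<^sup>2 = K\<^sup>2 - B\<^sup>2"
  unfolding mid_freq_def using abs_less_square_iff[of B K] by simp

lemma mid_wronsk_eq:
  "\<bar>B\<bar> < K \<Longrightarrow> mid_wronsk K d B = (cos (mid_freq K B * d) + B * sin (mid_freq K B * d) / mid_freq K B)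
     * (mid_freq K B * sin (mid_freq K B * d) - B * cos (mid_freq K B * d))"
  unfolding mid_wronsk_def even_mode_def odd_mode_def using mid_freq_pos[of B K] by (simp add: field_simps)

lemma has_real_derivative_mid_freq:
  assumes "\<bar>B\<bar> < K"
  shows "(mid_freq K has_real_derivative - B / mid_freq K B) (at B)"
proof -
  have p: "0 < K\<^sup>2 - B\<^sup>2" using abs_less_square_iff[of B K] assms by simp
  have "((\<lambda>B. sqrt (K\<^sup>2 - B\<^sup>2)) has_real_derivative (inverse (sqrt (K\<^sup>2 - B\<^sup>2)) / 2) * (- 2 * B)) (at B)"
    by (rule DERIV_chain2[where f=sqrt and g="\<lambda>B. K\<^sup>2 - B\<^sup>2", OF DERIV_real_sqrt[OF p]])
       (auto intro!: derivative_eq_intros)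
  moreover have "(inverse (sqrt (K\<^sup>2 - B\<^sup>2)) / 2) * (- 2 * B) = - B / mid_freq K B"
    unfolding mid_freq_def by (simp add: field_simps)
  ultimately show ?thesis unfolding mid_freq_def[abs_def] by simp
qed

lemma has_real_derivative_even_mode:
  assumes "\<bar>B\<bar> < K"
  shows "(even_mode K d has_real_derivative
     (- B / mid_freq K B) * (cos (mid_freq K B * d) - mid_freq K B * d * sin (mid_freq K B * d)
        + B * d * cos (mid_freq K B * d)) + sin (mid_freq K B * d)) (at B)"
  unfolding even_mode_def[abs_def]
  by (rule derivative_eq_intros has_real_derivative_mid_freq[OF assms] refl)+ (simp add: algebra_simps)

lemma has_real_derivative_odd_mode:
  assumes "\<bar>B\<bar> < K"
  shows "(odd_mode K d has_real_derivative
     (- B / mid_freq K B) * (sin (mid_freq K B * d) + mid_freq K B * d * cos (mid_freq K B * d)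
        + B * d * sin (mid_freq K B * d)) - cos (mid_freq K B * d)) (at B)"
  unfolding odd_mode_def[abs_def]
  by (rule derivative_eq_intros has_real_derivative_mid_freq[OF assms] refl)+ (simp add: algebra_simps)

text \<open>At a zero of a mode, \<open>m\<^sup>2\<close> times its derivative is \<open>\<plusminus>K\<^sup>2 (1 + B d)\<close> times \<open>sin (m d)\<close> resp.
  \<open>cos (m d)\<close>, which cannot vanish together with the mode.\<close>
lemma even_mode_zero_imp_deriv_nonzero:
  assumes B: "\<bar>B\<bar> < K" "0 \<le> B" and d: "0 < d" and z: "even_mode K d B = 0"
  shows "(- B / mid_freq K B) * (cos (mid_freq K B * d) - mid_freq K B * d * sin (mid_freq K B * d)
           + B * d * cos (mid_freq K B * d)) + sin (mid_freq K B * d) \<noteq> 0"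
proof -
  define m c s where "m = mid_freq K B" and "c = cos (m * d)" and "s = sin (m * d)"
  have m: "0 < m" unfolding m_def using mid_freq_pos[OF B(1)] .
  have msq: "m * m = K\<^sup>2 - B\<^sup>2" unfolding m_def using mid_freq_squared[OF B(1)] by (simp add: power2_eq_square)
  have mc: "m * c = - B * s" using z unfolding even_mode_def m_def[symmetric] c_def[symmetric] s_def[symmetric] by simp
  have "s \<noteq> 0"
  proof
    assume "s = 0"
    then have "c = 0" using mc m by simp
    then show False using sin_cos_squared_add[of "m * d"] \<open>s = 0\<close> unfolding c_def s_def by simp
  qed
  have "m * m * ((- B / m) * (c - m * d * s + B * d * c) + s) = - B * (m * c) + B * (m * m) * d * s - B * B * d * (m * c) + m * m * s"
    using m by (simp add: field_simps)
  also have "\<dots> = s * K\<^sup>2 * (1 + B * d)" unfolding mc msq by (simp add: algebra_simps power2_eq_square)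
  also have "\<dots> \<noteq> 0"
  proof -
    have "0 < 1 + B * d" using B(2) d by (smt (verit) mult_nonneg_nonneg)
    then show ?thesis using \<open>s \<noteq> 0\<close> B by simp
  qed
  finally show ?thesis unfolding m_def c_def s_def by auto
qed

lemma odd_mode_zero_imp_deriv_nonzero:
  assumes B: "\<bar>B\<bar> < K" "0 \<le> B" and d: "0 < d" and z: "odd_mode K d B = 0"
  shows "(- B / mid_freq K B) * (sin (mid_freq K B * d) + mid_freq K B * d * cos (mid_freq K B * d)
           + B * d * sin (mid_freq K B * d)) - cos (mid_freq K B * d) \<noteq> 0"
proof -
  define m c s where "m = mid_freq K B" and "c = cos (m * d)" and "s = sin (m * d)"
  have m: "0 < m" unfolding m_def using mid_freq_pos[OF B(1)] .
  have msq: "m * m = K\<^sup>2 - B\<^sup>2" unfolding m_def using mid_freq_squared[OF B(1)] by (simp add: power2_eq_square)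
  have ms: "m * s = B * c" using z unfolding odd_mode_def m_def[symmetric] c_def[symmetric] s_def[symmetric] by simp
  have "c \<noteq> 0"
  proof
    assume "c = 0"
    then have "s = 0" using ms m by simp
    then show False using sin_cos_squared_add[of "m * d"] \<open>c = 0\<close> unfolding c_def s_def by simp
  qed
  have "m * m * ((- B / m) * (s + m * d * c + B * d * s) - c) = - B * (m * s) - B * (m * m) * d * c - B * B * d * (m * s) - m * m * c"
    using m by (simp add: field_simps)
  also have "\<dots> = - c * K\<^sup>2 * (1 + B * d)" unfolding ms msq by (simp add: algebra_simps power2_eq_square)
  also have "\<dots> \<noteq> 0"
  proof -
    have "0 < 1 + B * d" using B(2) d by (smt (verit) mult_nonneg_nonneg)
    then show ?thesis using \<open>c \<noteq> 0\<close> B by simp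
  qed
  finally show ?thesis unfolding m_def c_def s_def by auto
qed

lemma even_odd_mode_not_both_zero:
  assumes B: "\<bar>B\<bar> < K" and z1: "even_mode K d B = 0" and z2: "odd_mode K d B = 0"
  shows False
proof -
  define m c s where "m = mid_freq K B" and "c = cos (m * d)" and "s = sin (m * d)"
  have m: "0 < m" unfolding m_def using mid_freq_pos[OF B] .
  have mc: "m * c = - B * s" using z1 unfolding even_mode_def m_def[symmetric] c_def[symmetric] s_def[symmetric] by simp
  have ms: "m * s = B * c" using z2 unfolding odd_mode_def m_def[symmetric] c_def[symmetric] s_def[symmetric] by simp
  have "m * (m * c) = - B * (m * s)" unfolding mc by simp
  then have "(m * m + B * B) * c = 0" unfolding ms by (simp add: algebra_simps)
  moreover have "0 < m * m + B * B" using m by (simp add: add_pos_nonneg)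
  ultimately have "c = 0" by (metis mult_eq_0_iff less_irrefl)
  then have "s = 0" using ms m by simp
  then show False using sin_cos_squared_add[of "m * d"] \<open>c = 0\<close> unfolding c_def s_def by simp
qed

lemma mid_wronsk_factored:
  "mid_wronsk K d = (\<lambda>B. even_mode K d B * (odd_mode K d B / mid_freq K B))"
  "mid_wronsk K d = (\<lambda>B. (even_mode K d B / mid_freq K B) * odd_mode K d B)"
  unfolding mid_wronsk_def by (simp_all add: fun_eq_iff)

lemma mid_wronsk_differentiable:
  assumes "\<bar>B\<bar> < K"
  shows "\<exists>D. (mid_wronsk K d has_real_derivative D) (at B)"
  unfolding mid_wronsk_factored(1)
  using DERIV_mult[OF has_real_derivative_even_mode[OF assms]
      DERIV_divide[OF has_real_derivative_odd_mode[OF assms] has_real_derivative_mid_freq[OF assms]]]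
    mid_freq_pos[OF assms] by auto

lemma continuous_on_mid_wronsk: "B' < K \<Longrightarrow> continuous_on {0..B'} (mid_wronsk K d)"
  using mid_wronsk_differentiable DERIV_isCont by (intro continuous_at_imp_continuous_on) force

lemma mid_wronsk_simple_zero:
  assumes B: "\<bar>B\<bar> < K" "0 \<le> B" and d: "0 < d" and z: "mid_wronsk K d B = 0"
  shows "\<exists>D. D \<noteq> 0 \<and> (mid_wronsk K d has_real_derivative D) (at B)"
proof -
  have m: "0 < mid_freq K B" "mid_freq K B \<noteq> 0" using mid_freq_pos[OF B(1)] by auto
  have "even_mode K d B = 0 \<or> odd_mode K d B = 0" using z m unfolding mid_wronsk_def by simp
  then show ?thesis
  proof
    assume z1: "even_mode K d B = 0"
    then have "odd_mode K d B / mid_freq K B \<noteq> 0" using even_odd_mode_not_both_zero[OF B(1)] m by auto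
    moreover note DERIV_mult[OF has_real_derivative_even_mode[OF B(1), of d]
      DERIV_divide[OF has_real_derivative_odd_mode[OF B(1), of d] has_real_derivative_mid_freq[OF B(1)] m(2)],
      unfolded z1, folded mid_wronsk_factored(1)]
    ultimately show ?thesis
      using even_mode_zero_imp_deriv_nonzero[OF B d z1] by (metis mult_zero_right add_0_right mult_eq_0_iff)
  next
    assume z2: "odd_mode K d B = 0"
    then have "even_mode K d B / mid_freq K B \<noteq> 0" using even_odd_mode_not_both_zero[OF B(1)] m by auto
    moreover note DERIV_mult[OF
      DERIV_divide[OF has_real_derivative_even_mode[OF B(1), of d] has_real_derivative_mid_freq[OF B(1)] m(2)]
      has_real_derivative_odd_mode[OF B(1), of d], unfolded z2, folded mid_wronsk_factored(2)]
    ultimately show ?thesis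
      using odd_mode_zero_imp_deriv_nonzero[OF B d z2] by (metis mult_zero_right add_0_left mult_eq_0_iff)
  qed
qed

lemma abs_sin_diff_le: "\<bar>sin (w::real) - sin z\<bar> \<le> \<bar>w - z\<bar>"
proof -
  have "\<bar>sin w - sin z\<bar> = 2 * \<bar>sin ((w - z) / 2)\<bar> * \<bar>cos ((w + z) / 2)\<bar>"
    unfolding sin_diff_sin by (simp add: abs_mult)
  also have "\<dots> \<le> 2 * \<bar>(w - z) / 2\<bar> * 1"
    by (intro mult_mono abs_sin_x_le_abs_x) auto
  finally show ?thesis by simp
qed

text \<open>Near \<open>B = K\<close> the inner frequency is small, so both factors of the Wronskian stay away from zero.\<close>
lemma mid_wronsk_ge_near_K:
  fixes K d B :: real
  assumes K: "0 < K" and d: "0 < d" and B: "0 \<le> B" "B < K"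
    and m: "mid_freq K B \<le> min (1 / (2 * d)) (K / 2)"
  shows "K / 16 \<le> \<bar>mid_wronsk K d B\<bar>"
proof -
  define m where "m = mid_freq K B"
  have Bk: "\<bar>B\<bar> < K" using B by simp
  have mpos: "0 < m" unfolding m_def using mid_freq_pos[OF Bk] .
  have msq: "m\<^sup>2 = K\<^sup>2 - B\<^sup>2" unfolding m_def using mid_freq_squared[OF Bk] .
  have m1: "m * d \<le> 1 / 2" using m d unfolding m_def[symmetric] by (simp add: field_simps)
  have m2: "m \<le> K / 2" using m unfolding m_def[symmetric] by simp
  define c where "c = cos (m * d)"
  define s where "s = sin (m * d)"
  have xd: "0 \<le> m * d" using mpos d by simp
  have c12: "1 / 2 \<le> c"
  proof -
    have "pi / 3 > 1" using pi_gt3 by simp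
    then have "cos (pi / 3) \<le> cos (m * d)" using m1 xd pi_gt3 by (intro cos_monotone_0_pi_le) auto
    then show ?thesis unfolding c_def cos_60 .
  qed
  have s0: "0 \<le> s" unfolding s_def using xd m1 pi_gt3 by (intro sin_ge_zero) auto
  have sx: "s \<le> m * d" unfolding s_def by (rule sin_x_le_x[OF xd])
  have B34: "3 * K / 4 \<le> B"
  proof -
    have "m * m \<le> (K / 2) * (K / 2)" using m2 mpos by (intro mult_mono) auto
    moreover have "B * B = K * K - m * m" using msq by (simp add: power2_eq_square)
    moreover have "0 \<le> K * K" by simp
    ultimately have "9 * (K * K) \<le> 16 * (B * B)" by linarith
    then have "(3 * K / 4)\<^sup>2 \<le> B\<^sup>2" by (simp add: power2_eq_square)
    then show ?thesis by (rule power2_le_imp_le) (use B in simp)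
  qed
  have "0 \<le> B * s / m" using s0 B mpos by simp
  then have Ev: "1 / 2 \<le> c + B * s / m" using c12 by linarith
  have Od: "m * s - B * c \<le> - K / 8"
  proof -
    have "m * s \<le> m * (m * d)" using sx mpos by (intro mult_left_mono) auto
    also have "\<dots> \<le> m * (1 / 2)" using m1 mpos by (intro mult_left_mono) auto
    also have "\<dots> \<le> K / 4" using m2 by simp
    finally have ms: "m * s \<le> K / 4" .
    have "3 * K / 4 * (1 / 2) \<le> B * c" using B34 c12 K by (intro mult_mono) auto
    then show ?thesis using ms by simp
  qed
  have TT: "mid_wronsk K d B = (c + B * s / m) * (m * s - B * c)"
    unfolding mid_wronsk_eq[OF Bk] m_def[symmetric] c_def[symmetric] s_def[symmetric] ..
  have "1 / 2 * (K / 8) \<le> (c + B * s / m) * \<bar>m * s - B * c\<bar>"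
  proof (intro mult_mono)
    show "0 \<le> c + B * s / m" using Ev by linarith
  qed (use Ev Od K in auto)
  moreover have "\<bar>c + B * s / m\<bar> = c + B * s / m" using Ev by (intro abs_of_nonneg) linarith
  ultimately show ?thesis unfolding TT abs_mult by simp
qed

lemma mid_wronsk_bounded_away_near_K:
  assumes K: "0 < K" and d: "0 < d"
  obtains \<mu> Bs where "0 < \<mu>" "0 < Bs" "Bs < K"
    "\<And>B. Bs \<le> B \<Longrightarrow> B < K \<Longrightarrow> K / 16 \<le> \<bar>mid_wronsk K d B\<bar>"
    "\<And>B. 0 \<le> B \<Longrightarrow> B \<le> Bs \<Longrightarrow> \<mu> \<le> mid_freq K B"
proof -
  define \<mu> where "\<mu> = min (1 / (2 * d)) (K / 2)"
  have \<mu>: "0 < \<mu>" "\<mu> \<le> K / 2" unfolding \<mu>_def using K d by auto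
  have "\<mu>\<^sup>2 < K\<^sup>2" using \<mu> K by (intro power_strict_mono) auto
  define Bs where "Bs = sqrt (K\<^sup>2 - \<mu>\<^sup>2)"
  have Bs: "Bs\<^sup>2 = K\<^sup>2 - \<mu>\<^sup>2" "0 < Bs" unfolding Bs_def using \<open>\<mu>\<^sup>2 < K\<^sup>2\<close> by simp_all
  have "Bs\<^sup>2 < K\<^sup>2" using Bs \<mu>(1) by simp
  then have "Bs < K" using K by (simp add: power_less_imp_less_base)
  have hi: "mid_freq K B \<le> \<mu>" if "Bs \<le> B" "B < K" for B
  proof -
    have "Bs\<^sup>2 \<le> B\<^sup>2" using that Bs by (intro power_mono) auto
    then have "sqrt (K\<^sup>2 - B\<^sup>2) \<le> sqrt (\<mu>\<^sup>2)" using Bs by (intro real_sqrt_le_mono) simp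
    then show ?thesis unfolding mid_freq_def using \<mu> by simp
  qed
  have lo: "\<mu> \<le> mid_freq K B" if "0 \<le> B" "B \<le> Bs" for B
  proof -
    have "B\<^sup>2 \<le> Bs\<^sup>2" using that by (intro power_mono) auto
    then have "sqrt (\<mu>\<^sup>2) \<le> sqrt (K\<^sup>2 - B\<^sup>2)" using Bs by (intro real_sqrt_le_mono) simp
    then show ?thesis unfolding mid_freq_def using \<mu> by simp
  qed
  have far: "K / 16 \<le> \<bar>mid_wronsk K d B\<bar>" if "Bs \<le> B" "B < K" for B
    using mid_wronsk_ge_near_K[OF K d _ that(2)] hi[OF that] that Bs(2) unfolding \<mu>_def by simp
  show ?thesis by (rule that[OF \<mu>(1) Bs(2) \<open>Bs < K\<close> far lo])
qed

lemma abs_sin_div_mid_freq_le: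
  assumes "0 \<le> B" "B < K" "0 < d"
  shows "\<bar>sin (2 * mid_freq K B * d) / mid_freq K B\<bar> \<le> 2 * d"
  using abs_sin_mult_div_le[OF mid_freq_pos, of B K "2 * d"] assms by (simp add: mult_ac)

text \<open>A zero of \<open>mid_wronsk K d\<close> at \<open>B = 0\<close> forces \<open>sin (2 K d) = 0\<close>; then \<open>sin (2 m d) / m\<close> is \<open>O(B)\<close>.\<close>
lemma abs_sin_div_mid_freq_le_threshold:
  assumes K: "0 < K" and d: "0 < d" and T0: "mid_wronsk K d 0 = 0" and B: "0 < B" "B < K"
    and \<mu>: "0 < \<mu>" "\<mu> \<le> mid_freq K B"
  shows "\<bar>sin (2 * mid_freq K B * d) / mid_freq K B\<bar> \<le> 2 * d / \<mu> * B"
proof -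
  define m where "m = mid_freq K B"
  have m: "0 < m" "m\<^sup>2 = K\<^sup>2 - B\<^sup>2" unfolding m_def using mid_freq_pos[of B K] mid_freq_squared[of B K] B by auto
  have "mid_wronsk K d 0 = K * (cos (K * d) * sin (K * d))"
    using K by (simp add: mid_wronsk_def even_mode_def odd_mode_def mid_freq_def field_simps power2_eq_square)
  then have "sin (2 * K * d) = 0" using T0 K sin_double[of "K * d"] by (auto simp: mult.assoc)
  have "m\<^sup>2 \<le> K\<^sup>2" unfolding m(2) by simp
  then have "m \<le> K" by (rule power2_le_imp_le) (use K in simp)
  have "K - B \<le> m"
  proof -
    have "(K - B)\<^sup>2 \<le> m\<^sup>2" unfolding m(2) using B by (simp add: power2_eq_square algebra_simps mult_right_mono)
    then show ?thesis by (rule power2_le_imp_le) (use m in simp)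
  qed
  have "\<bar>sin (2 * m * d)\<bar> = \<bar>sin (2 * m * d) - sin (2 * K * d)\<bar>" using \<open>sin (2 * K * d) = 0\<close> by simp
  also have "\<dots> \<le> \<bar>2 * m * d - 2 * K * d\<bar>" by (rule abs_sin_diff_le)
  also have "\<dots> = 2 * d * (K - m)"
    using \<open>m \<le> K\<close> d by (simp add: abs_if algebra_simps mult_le_cancel_left_pos)
  also have "\<dots> \<le> 2 * d * B" using \<open>K - B \<le> m\<close> d by simp
  finally have "\<bar>sin (2 * m * d)\<bar> \<le> 2 * d * B" .
  then have "\<bar>sin (2 * m * d)\<bar> / m \<le> 2 * d * B / \<mu>"
    using m \<mu> B d unfolding m_def by (intro frac_le) auto
  then show ?thesis using m unfolding m_def by (simp add: abs_divide mult_ac)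
qed

lemma prod_abs_diff_squares_le:
  fixes Z :: "real set"
  assumes Z: "Z \<subseteq> {0<..<K}" and B: "0 < B" "B < K"
  shows "(\<Prod>z\<in>Z. \<bar>B\<^sup>2 - z\<^sup>2\<bar>) \<le> (2 * K) ^ card Z * (\<Prod>z\<in>Z. \<bar>B - z\<bar>)"
    and "(\<Prod>z\<in>Z. \<bar>B\<^sup>2 - z\<^sup>2\<bar>) \<le> (K\<^sup>2) ^ card Z"
proof -
  have "(\<Prod>z\<in>Z. \<bar>B\<^sup>2 - z\<^sup>2\<bar>) \<le> (\<Prod>z\<in>Z. \<bar>B - z\<bar> * (2 * K))"
  proof (rule prod_mono)
    fix z assume "z \<in> Z"
    then have z: "0 < z" "z < K" using Z by auto
    have "B\<^sup>2 - z\<^sup>2 = (B - z) * (B + z)" by (simp add: power2_eq_square algebra_simps)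
    then have "\<bar>B\<^sup>2 - z\<^sup>2\<bar> = \<bar>B - z\<bar> * (B + z)" using z B by (simp add: abs_mult)
    then show "0 \<le> \<bar>B\<^sup>2 - z\<^sup>2\<bar> \<and> \<bar>B\<^sup>2 - z\<^sup>2\<bar> \<le> \<bar>B - z\<bar> * (2 * K)"
      using z B by (auto intro: mult_left_mono)
  qed
  then show "(\<Prod>z\<in>Z. \<bar>B\<^sup>2 - z\<^sup>2\<bar>) \<le> (2 * K) ^ card Z * (\<Prod>z\<in>Z. \<bar>B - z\<bar>)"
    by (simp add: prod.distrib mult.commute)
  have "(\<Prod>z\<in>Z. \<bar>B\<^sup>2 - z\<^sup>2\<bar>) \<le> (\<Prod>z\<in>Z. K\<^sup>2)"
  proof (rule prod_mono)
    fix z assume "z \<in> Z"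
    then have "0 < z" "z < K" using Z by auto
    then have "B\<^sup>2 < K\<^sup>2" "z\<^sup>2 < K\<^sup>2" "0 \<le> z\<^sup>2" using B by (auto intro: power_strict_mono)
    then show "0 \<le> \<bar>B\<^sup>2 - z\<^sup>2\<bar> \<and> \<bar>B\<^sup>2 - z\<^sup>2\<bar> \<le> K\<^sup>2"
      unfolding abs_le_iff using zero_le_power2[of B] zero_le_power2[of z] by linarith
  qed
  then show "(\<Prod>z\<in>Z. \<bar>B\<^sup>2 - z\<^sup>2\<bar>) \<le> (K\<^sup>2) ^ card Z" by simp
qed

lemma mid_wronsk_zero_set:
  fixes K d :: real
  assumes K: "0 < K" and d: "0 < d"
  defines "Z \<equiv> {z. 0 < z \<and> z < K \<and> mid_wronsk K d z = 0}"
  obtains \<mu> Bs c0 where "0 < \<mu>" "0 < Bs" "Bs < K" "0 < c0"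
    "\<And>B. Bs \<le> B \<Longrightarrow> B < K \<Longrightarrow> K / 16 \<le> \<bar>mid_wronsk K d B\<bar>"
    "\<And>B. 0 \<le> B \<Longrightarrow> B \<le> Bs \<Longrightarrow> \<mu> \<le> mid_freq K B"
    "\<And>B. 0 \<le> B \<Longrightarrow> B \<le> Bs \<Longrightarrow>
       c0 * (\<Prod>z\<in>{z\<in>{0..Bs}. mid_wronsk K d z = 0}. \<bar>B - z\<bar>) \<le> \<bar>mid_wronsk K d B\<bar>"
    "finite {z\<in>{0..Bs}. mid_wronsk K d z = 0}" "Z = {z\<in>{0..Bs}. mid_wronsk K d z = 0} - {0}"
proof -
  obtain \<mu> Bs where \<mu>: "0 < \<mu>" and Bs: "0 < Bs" "Bs < K"
    and far: "\<And>B. Bs \<le> B \<Longrightarrow> B < K \<Longrightarrow> K / 16 \<le> \<bar>mid_wronsk K d B\<bar>"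
    and lo: "\<And>B. 0 \<le> B \<Longrightarrow> B \<le> Bs \<Longrightarrow> \<mu> \<le> mid_freq K B"
    using mid_wronsk_bounded_away_near_K[OF K d] by blast
  define Zs where "Zs = {z\<in>{0..Bs}. mid_wronsk K d z = 0}"
  have simple: "\<exists>D. D \<noteq> 0 \<and> (mid_wronsk K d has_real_derivative D) (at z)"
    if "z \<in> {0..Bs}" "mid_wronsk K d z = 0" for z
    using that Bs d by (intro mid_wronsk_simple_zero) auto
  have "finite Zs"
    unfolding Zs_def by (rule simple_zeros_finite[OF continuous_on_mid_wronsk[OF Bs(2)] simple])
  obtain c0 where c0: "0 < c0" "\<And>x. x \<in> {0..Bs} \<Longrightarrow> c0 * (\<Prod>z\<in>Zs. \<bar>x - z\<bar>) \<le> \<bar>mid_wronsk K d x\<bar>"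
    using simple_zeros_product_le[OF continuous_on_mid_wronsk[OF Bs(2)] simple] unfolding Zs_def by blast
  have "Z = Zs - {0}"
  proof
    show "Z \<subseteq> Zs - {0}"
    proof
      fix z assume z: "z \<in> Z"
      then have "\<not> Bs \<le> z" using far[of z] K unfolding Z_def by auto
      then show "z \<in> Zs - {0}" using z unfolding Z_def Zs_def by auto
    qed
    show "Zs - {0} \<subseteq> Z" unfolding Z_def Zs_def using Bs by auto
  qed
  then show ?thesis
    using that[OF \<mu> Bs c0(1) far lo] c0(2) \<open>finite Zs\<close> unfolding Zs_def by auto
qed

lemma mid_wronsk_product_le:
  fixes K d :: real
  assumes K: "0 < K" and d: "0 < d"
  defines "Z \<equiv> {z. 0 < z \<and> z < K \<and> mid_wronsk K d z = 0}"
  shows "finite Z"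
    and "\<exists>C. \<forall>B. 0 < B \<longrightarrow> B < K \<longrightarrow>
           (B + \<bar>sin (2 * mid_freq K B * d) / mid_freq K B\<bar>) * (\<Prod>z\<in>Z. \<bar>B\<^sup>2 - z\<^sup>2\<bar>) \<le> C * \<bar>mid_wronsk K d B\<bar>"
proof -
  obtain \<mu> Bs c0 where \<mu>: "0 < \<mu>" and Bs: "0 < Bs" "Bs < K" and c0: "0 < c0"
    and far: "\<And>B. Bs \<le> B \<Longrightarrow> B < K \<Longrightarrow> K / 16 \<le> \<bar>mid_wronsk K d B\<bar>"
    and lo: "\<And>B. 0 \<le> B \<Longrightarrow> B \<le> Bs \<Longrightarrow> \<mu> \<le> mid_freq K B"
    and near_zero: "\<And>B. 0 \<le> B \<Longrightarrow> B \<le> Bs \<Longrightarrow>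
       c0 * (\<Prod>z\<in>{z\<in>{0..Bs}. mid_wronsk K d z = 0}. \<bar>B - z\<bar>) \<le> \<bar>mid_wronsk K d B\<bar>"
    and fin: "finite {z\<in>{0..Bs}. mid_wronsk K d z = 0}" and Z: "Z = {z\<in>{0..Bs}. mid_wronsk K d z = 0} - {0}"
    using mid_wronsk_zero_set[OF K d] unfolding Z_def by blast
  define Zs where "Zs = {z\<in>{0..Bs}. mid_wronsk K d z = 0}"
  have Z_eq: "Z = Zs - {0}" using Z unfolding Zs_def .
  then show "finite Z" using fin unfolding Zs_def by simp
  define n where "n = card Z"
  define C_far where "C_far = (K + 2 * d) * (K\<^sup>2) ^ n * 16 / K"
  define C_near where "C_near = (K + 2 * d + (1 + 2 * d / \<mu>)) * (2 * K) ^ n / c0"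
  have "(B + \<bar>sin (2 * mid_freq K B * d) / mid_freq K B\<bar>) * (\<Prod>z\<in>Z. \<bar>B\<^sup>2 - z\<^sup>2\<bar>)
      \<le> (C_far + C_near) * \<bar>mid_wronsk K d B\<bar>" if B: "0 < B" "B < K" for B
  proof -
    define S where "S = \<bar>sin (2 * mid_freq K B * d) / mid_freq K B\<bar>"
    have "Z \<subseteq> {0<..<K}" unfolding Z_def by auto
    note prod = prod_abs_diff_squares_le[OF this B, folded n_def]
    have S: "S \<le> 2 * d" unfolding S_def using abs_sin_div_mid_freq_le[of B K d] B d by simp
    have C: "0 \<le> C_far" "0 \<le> C_near" unfolding C_far_def C_near_def using K d \<mu> c0 by auto
    show ?thesis
    proof (cases "Bs \<le> B")
      case True
      have "(B + S) * (\<Prod>z\<in>Z. \<bar>B\<^sup>2 - z\<^sup>2\<bar>) \<le> (K + 2 * d) * (K\<^sup>2) ^ n"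
        using S B prod(2) d by (intro mult_mono) (auto intro: prod_nonneg)
      also have "\<dots> = C_far * (K / 16)" unfolding C_far_def using K by simp
      also have "\<dots> \<le> (C_far + C_near) * \<bar>mid_wronsk K d B\<bar>"
        using far[OF True B(2)] C K by (intro mult_mono) auto
      finally show ?thesis unfolding S_def .
    next
      case False
      have PZ: "0 \<le> (\<Prod>z\<in>Z. \<bar>B - z\<bar>)" "0 \<le> (\<Prod>z\<in>Zs. \<bar>B - z\<bar>)" by (auto intro: prod_nonneg)
      have near: "(B + S) * (\<Prod>z\<in>Z. \<bar>B - z\<bar>) \<le> (K + 2 * d + (1 + 2 * d / \<mu>)) * (\<Prod>z\<in>Zs. \<bar>B - z\<bar>)"
      proof (cases "0 \<in> Zs")
        case True
        then have "Zs = insert 0 Z" "0 \<notin> Z" using Z_eq unfolding Z_def by auto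
        then have PZs: "(\<Prod>z\<in>Zs. \<bar>B - z\<bar>) = B * (\<Prod>z\<in>Z. \<bar>B - z\<bar>)"
          using \<open>finite Z\<close> B by simp
        have "S \<le> 2 * d / \<mu> * B"
          unfolding S_def using True False B lo[of B] \<mu> K d unfolding Zs_def
          by (intro abs_sin_div_mid_freq_le_threshold) auto
        have "(B + S) * (\<Prod>z\<in>Z. \<bar>B - z\<bar>) \<le> ((1 + 2 * d / \<mu>) * B) * (\<Prod>z\<in>Z. \<bar>B - z\<bar>)"
          using \<open>S \<le> 2 * d / \<mu> * B\<close> PZ by (intro mult_right_mono) (auto simp: algebra_simps)
        also have "\<dots> = (1 + 2 * d / \<mu>) * (\<Prod>z\<in>Zs. \<bar>B - z\<bar>)"
          unfolding PZs by simp
        also have "\<dots> \<le> (K + 2 * d + (1 + 2 * d / \<mu>)) * (\<Prod>z\<in>Zs. \<bar>B - z\<bar>)"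
          using PZ K d by (intro mult_right_mono) auto
        finally show ?thesis .
      next
        case False
        then have "Zs = Z" using Z_eq by auto
        moreover have "B + S \<le> K + 2 * d + (1 + 2 * d / \<mu>)"
          using S B divide_nonneg_pos[of "2 * d" \<mu>] \<mu> d by linarith
        ultimately show ?thesis using PZ by (simp add: mult_right_mono)
      qed
      have "(B + S) * (\<Prod>z\<in>Z. \<bar>B\<^sup>2 - z\<^sup>2\<bar>) \<le> (B + S) * ((2 * K) ^ n * (\<Prod>z\<in>Z. \<bar>B - z\<bar>))"
        using prod(1) S B by (intro mult_left_mono) (auto simp: S_def)
      also have "\<dots> = (2 * K) ^ n * ((B + S) * (\<Prod>z\<in>Z. \<bar>B - z\<bar>))" by (simp add: mult_ac)
      also have "\<dots> \<le> (2 * K) ^ n * ((K + 2 * d + (1 + 2 * d / \<mu>)) * (\<Prod>z\<in>Zs. \<bar>B - z\<bar>))"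
        using near K by (intro mult_left_mono) auto
      also have "\<dots> = C_near * (c0 * (\<Prod>z\<in>Zs. \<bar>B - z\<bar>))" unfolding C_near_def using c0 by simp
      also have "\<dots> \<le> C_near * \<bar>mid_wronsk K d B\<bar>"
      proof -
        have "c0 * (\<Prod>z\<in>Zs. \<bar>B - z\<bar>) \<le> \<bar>mid_wronsk K d B\<bar>"
          using near_zero[of B] False B unfolding Zs_def by auto
        then show ?thesis using C by (intro mult_left_mono)
      qed
      also have "\<dots> \<le> (C_far + C_near) * \<bar>mid_wronsk K d B\<bar>" using C by (intro mult_right_mono) auto
      finally show ?thesis unfolding S_def .
    qed
  qed
  then show "\<exists>C. \<forall>B. 0 < B \<longrightarrow> B < K \<longrightarrow>
           (B + \<bar>sin (2 * mid_freq K B * d) / mid_freq K B\<bar>) * (\<Prod>z\<in>Z. \<bar>B\<^sup>2 - z\<^sup>2\<bar>) \<le> C * \<bar>mid_wronsk K d B\<bar>"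
    by (intro exI[of _ "C_far + C_near"] allI impI)
qed

section \<open>The resolvent estimates in terms of \<open>\<xi>\<close>\<close>

lemma resolv_bound_below_k1:
  assumes k: "0 < k1" "k1 < k2" and d: "0 < d"
  obtains C where "0 \<le> C"
    "\<And>\<xi> x y. \<bar>\<xi>\<bar> < k1 \<Longrightarrow> x \<noteq> y \<Longrightarrow> cmod (resolv k1 k2 d \<xi> x y) \<le> C / sqrt \<bar>\<xi>\<^sup>2 - k1\<^sup>2\<bar>"
proof
  show "0 \<le> (1 + 2 * d * k1) * (2 + 2 * d * k1)" using k d by simp
  fix \<xi> x y :: real assume \<xi>: "\<bar>\<xi>\<bar> < k1" and xy: "x \<noteq> y"
  define kr mr where "kr = sqrt (k1\<^sup>2 - \<xi>\<^sup>2)" and "mr = sqrt (k2\<^sup>2 - \<xi>\<^sup>2)"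
  have "\<xi>\<^sup>2 < k1\<^sup>2" "k1\<^sup>2 < k2\<^sup>2" using \<xi> k abs_less_square_iff[of \<xi> k1] abs_less_square_iff[of k1 k2] by auto
  then have kr: "0 < kr" "kr \<le> k1" "sqrt \<bar>\<xi>\<^sup>2 - k1\<^sup>2\<bar> = kr" and mr: "0 < mr"
    unfolding kr_def mr_def using k real_sqrt_le_mono[of "k1\<^sup>2 - \<xi>\<^sup>2" "k1\<^sup>2"] by (auto simp: abs_if)
  have "cmod (resolv k1 k2 d \<xi> x y) = jost_ratio (of_real kr) (of_real mr) d (min x y) (max x y)"
    using norm_resolv_eq_jost_ratio[OF k d, of \<xi>] \<xi> k unfolding kr_def mr_def by (simp add: kappa_inside)
  also have "\<dots> \<le> (1 + 2 * d * kr) * (2 + 2 * d * kr) / kr"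
    using xy by (intro jost_ratio_of_real_le[OF kr(1) mr d]) (simp add: min_def max_def)
  also have "\<dots> \<le> (1 + 2 * d * k1) * (2 + 2 * d * k1) / kr"
    using kr d by (intro divide_right_mono mult_mono) auto
  finally show "cmod (resolv k1 k2 d \<xi> x y) \<le> (1 + 2 * d * k1) * (2 + 2 * d * k1) / sqrt \<bar>\<xi>\<^sup>2 - k1\<^sup>2\<bar>"
    unfolding kr .
qed

lemma threshold_ratio_le:
  assumes k: "0 < k1" "k1 < k2" and \<xi>: "k2 < \<bar>\<xi>\<bar>"
  shows "sqrt (k2\<^sup>2 - k1\<^sup>2) * (1 + \<bar>\<xi>\<bar>) \<le> sqrt (\<xi>\<^sup>2 - k1\<^sup>2) * (1 + k2)"
proof -
  define K B where "K = sqrt (k2\<^sup>2 - k1\<^sup>2)" and "B = sqrt (\<xi>\<^sup>2 - k1\<^sup>2)"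
  have sq: "k1\<^sup>2 < k2\<^sup>2" "k2\<^sup>2 < \<xi>\<^sup>2"
    using k \<xi> abs_less_square_iff[of k1 k2] abs_less_square_iff[of k2 \<xi>] by auto
  then have KB: "K\<^sup>2 = k2\<^sup>2 - k1\<^sup>2" "B\<^sup>2 = \<xi>\<^sup>2 - k1\<^sup>2" "0 < K" "K \<le> B"
    unfolding K_def B_def by (auto intro: real_sqrt_le_mono)
  have "(K * \<bar>\<xi>\<bar>)\<^sup>2 = K\<^sup>2 * (B\<^sup>2 + k1\<^sup>2)" using KB by (simp add: power_mult_distrib)
  also have "\<dots> \<le> B\<^sup>2 * (K\<^sup>2 + k1\<^sup>2)"
  proof -
    have "K\<^sup>2 * k1\<^sup>2 \<le> B\<^sup>2 * k1\<^sup>2" using KB by (intro mult_right_mono power_mono) auto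
    then show ?thesis by (simp add: algebra_simps)
  qed
  also have "\<dots> = (B * k2)\<^sup>2" using KB by (simp add: power_mult_distrib)
  finally have "K * \<bar>\<xi>\<bar> \<le> B * k2" by (rule power2_le_imp_le) (use KB k in simp)
  then show ?thesis using KB unfolding K_def[symmetric] B_def[symmetric] by (simp add: algebra_simps)
qed

lemma resolv_bound_above_k2:
  assumes k: "0 < k1" "k1 < k2" and d: "0 < d"
  obtains C where "0 \<le> C"
    "\<And>\<xi> x y. k2 < \<bar>\<xi>\<bar> \<Longrightarrow> x \<noteq> y \<Longrightarrow>
       cmod (resolv k1 k2 d \<xi> x y) \<le> C / (1 + \<bar>\<xi>\<bar>) * exp (- sqrt (\<xi>\<^sup>2 - k2\<^sup>2) * \<bar>x - y\<bar>)"
    "\<And>\<xi> x y. k2 < \<bar>\<xi>\<bar> \<Longrightarrow> x \<noteq> y \<Longrightarrow>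
       max x y \<le> -d \<or> d \<le> min x y \<or> (min x y \<le> -d \<and> d \<le> max x y) \<Longrightarrow>
       cmod (resolv k1 k2 d \<xi> x y) \<le> C / (1 + \<bar>\<xi>\<bar>) * exp (- sqrt (\<xi>\<^sup>2 - k1\<^sup>2) * \<bar>x - y\<bar>)"
proof -
  define K where "K = sqrt (k2\<^sup>2 - k1\<^sup>2)"
  define Cst where "Cst = max (exp (2 * K * d) + 1) ((2 + 4 * K * d)\<^sup>2)"
  have k12: "k1\<^sup>2 < k2\<^sup>2" using k abs_less_square_iff[of k1 k2] by simp
  then have K: "0 < K" "K\<^sup>2 = k2\<^sup>2 - k1\<^sup>2" unfolding K_def by auto
  have Cst: "0 \<le> Cst" unfolding Cst_def by (simp add: le_max_iff_disj)
  have reduce: "cmod (resolv k1 k2 d \<xi> x y) \<le> Cst * (1 + k2) / K / (1 + \<bar>\<xi>\<bar>) * exp (- E * \<bar>x - y\<bar>)"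
    if \<xi>: "k2 < \<bar>\<xi>\<bar>" and xy: "x \<noteq> y"
      and bound: "jost_ratio (\<i> * of_real (sqrt (\<xi>\<^sup>2 - k1\<^sup>2))) (\<i> * of_real (sqrt (\<xi>\<^sup>2 - k2\<^sup>2))) d (min x y) (max x y)
                    \<le> Cst / sqrt (\<xi>\<^sup>2 - k1\<^sup>2) * exp (- E * (max x y - min x y))"
    for \<xi> x y E
  proof -
    have "k1\<^sup>2 < \<xi>\<^sup>2" using k \<xi> abs_less_square_iff[of k1 \<xi>] by simp
    then have B: "0 < sqrt (\<xi>\<^sup>2 - k1\<^sup>2)" by simp
    have "Cst / sqrt (\<xi>\<^sup>2 - k1\<^sup>2) = Cst * (1 + k2) / (sqrt (\<xi>\<^sup>2 - k1\<^sup>2) * (1 + k2))" using k by simp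
    also have "\<dots> \<le> Cst * (1 + k2) / (K * (1 + \<bar>\<xi>\<bar>))"
      using threshold_ratio_le[OF k \<xi>] K Cst k B unfolding K_def[symmetric]
      by (intro divide_left_mono mult_nonneg_nonneg mult_pos_pos) auto
    finally have "Cst / sqrt (\<xi>\<^sup>2 - k1\<^sup>2) \<le> Cst * (1 + k2) / K / (1 + \<bar>\<xi>\<bar>)" by simp
    moreover have "cmod (resolv k1 k2 d \<xi> x y)
        = jost_ratio (\<i> * of_real (sqrt (\<xi>\<^sup>2 - k1\<^sup>2))) (\<i> * of_real (sqrt (\<xi>\<^sup>2 - k2\<^sup>2))) d (min x y) (max x y)"
      using norm_resolv_eq_jost_ratio[OF k d, of \<xi>] \<xi> k by (simp add: kappa_outside)
    moreover have "max x y - min x y = \<bar>x - y\<bar>" by (simp add: max_def min_def)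
    ultimately show ?thesis using bound by (smt (verit) exp_gt_zero mult_right_mono)
  qed
  show ?thesis
  proof
    show "0 \<le> Cst * (1 + k2) / K" using Cst K k by simp
    fix \<xi> x y :: real assume \<xi>: "k2 < \<bar>\<xi>\<bar>" and xy: "x \<noteq> y"
    define A B where "A = sqrt (\<xi>\<^sup>2 - k2\<^sup>2)" and "B = sqrt (\<xi>\<^sup>2 - k1\<^sup>2)"
    have "k2\<^sup>2 < \<xi>\<^sup>2" using \<xi> k abs_less_square_iff[of k2 \<xi>] by simp
    then have AB: "0 < A" "A < B" "B\<^sup>2 - A\<^sup>2 = K\<^sup>2" unfolding A_def B_def using k12 K by auto
    have ab: "min x y < max x y" using xy by (simp add: min_def max_def)
    note bounds = jost_ratio_imaginary_imaginary_le[OF AB(1,2) K(1) AB(3) d ab, folded Cst_def]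
    show "cmod (resolv k1 k2 d \<xi> x y) \<le> Cst * (1 + k2) / K / (1 + \<bar>\<xi>\<bar>) * exp (- sqrt (\<xi>\<^sup>2 - k2\<^sup>2) * \<bar>x - y\<bar>)"
      using reduce[OF \<xi> xy] bounds(1) unfolding A_def B_def by blast
    assume "max x y \<le> -d \<or> d \<le> min x y \<or> (min x y \<le> -d \<and> d \<le> max x y)"
    then show "cmod (resolv k1 k2 d \<xi> x y) \<le> Cst * (1 + k2) / K / (1 + \<bar>\<xi>\<bar>) * exp (- sqrt (\<xi>\<^sup>2 - k1\<^sup>2) * \<bar>x - y\<bar>)"
      using reduce[OF \<xi> xy] bounds(2) unfolding A_def B_def by blast
  qed
qed

lemma wronsk_between_thresholds:
  assumes k: "0 < k1" "k1 < k2" and d: "0 < d" and \<xi>: "k1 < \<bar>\<xi>\<bar>" "\<bar>\<xi>\<bar> < k2"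
  defines "B \<equiv> sqrt (\<xi>\<^sup>2 - k1\<^sup>2)" and "K \<equiv> sqrt (k2\<^sup>2 - k1\<^sup>2)"
  shows "0 < B" "B < K" "kappa k1 \<xi> = \<i> * of_real B" "kappa k2 \<xi> = of_real (mid_freq K B)"
    and "wronsk k1 k2 d \<xi> = of_real (2 * (exp (- B * d))\<^sup>2 * mid_wronsk K d B)"
proof -
  have sq: "k1\<^sup>2 < \<xi>\<^sup>2" "\<xi>\<^sup>2 < k2\<^sup>2"
    using k \<xi> abs_less_square_iff[of k1 \<xi>] abs_less_square_iff[of \<xi> k2] by auto
  then show B: "0 < B" "B < K" unfolding B_def K_def by auto
  have m: "mid_freq K B = sqrt (k2\<^sup>2 - \<xi>\<^sup>2)" unfolding mid_freq_def B_def K_def using sq k by simp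
  show \<kappa>: "kappa k1 \<xi> = \<i> * of_real B" "kappa k2 \<xi> = of_real (mid_freq K B)"
    unfolding m using \<xi> by (simp_all add: B_def kappa_outside kappa_inside)
  have "\<bar>B\<bar> < K" using B by simp
  then show "wronsk k1 k2 d \<xi> = of_real (2 * (exp (- B * d))\<^sup>2 * mid_wronsk K d B)"
    using wronsk_eq_jost_wronsk[OF k d, of \<xi>] \<xi> unfolding \<kappa> jost_wronsk_imaginary[OF d]
      mult.assoc[of _ "jost_even B _ d"] jost_even_of_real jost_odd_of_real mid_wronsk_eq[OF \<open>\<bar>B\<bar> < K\<close>]
    by simp
qed

lemma prod_wzeros_eq:
  assumes k: "0 < k1" "k1 < k2" and d: "0 < d" and \<xi>: "k1 < \<bar>\<xi>\<bar>" "\<bar>\<xi>\<bar> < k2"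
  defines "K \<equiv> sqrt (k2\<^sup>2 - k1\<^sup>2)"
  shows "(\<Prod>\<zeta>\<in>wzeros k1 k2 d. \<bar>\<xi>\<^sup>2 - \<zeta>\<^sup>2\<bar>)
           = (\<Prod>z\<in>{z. 0 < z \<and> z < K \<and> mid_wronsk K d z = 0}. \<bar>(sqrt (\<xi>\<^sup>2 - k1\<^sup>2))\<^sup>2 - z\<^sup>2\<bar>)"
proof (rule prod.reindex_bij_witness[where j="\<lambda>\<zeta>. sqrt (\<zeta>\<^sup>2 - k1\<^sup>2)" and i="\<lambda>z. sqrt (z\<^sup>2 + k1\<^sup>2)"])
  have k12: "k1\<^sup>2 < k2\<^sup>2" using k abs_less_square_iff[of k1 k2] by simp
  have zero_iff: "\<zeta> \<in> wzeros k1 k2 d \<longleftrightarrow> k1 < \<zeta> \<and> \<zeta> < k2 \<and> mid_wronsk K d (sqrt (\<zeta>\<^sup>2 - k1\<^sup>2)) = 0" for \<zeta>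
    using wronsk_between_thresholds(5)[OF k d, of \<zeta>] k unfolding wzeros_def K_def by auto
  fix \<zeta> assume "\<zeta> \<in> wzeros k1 k2 d"
  then have z: "k1 < \<zeta>" "\<zeta> < k2" "mid_wronsk K d (sqrt (\<zeta>\<^sup>2 - k1\<^sup>2)) = 0" using zero_iff by auto
  then have "k1\<^sup>2 < \<zeta>\<^sup>2" "\<zeta>\<^sup>2 < k2\<^sup>2" using k abs_less_square_iff[of k1 \<zeta>] abs_less_square_iff[of \<zeta> k2] by auto
  then show "sqrt ((sqrt (\<zeta>\<^sup>2 - k1\<^sup>2))\<^sup>2 + k1\<^sup>2) = \<zeta>" "sqrt (\<zeta>\<^sup>2 - k1\<^sup>2) \<in> {z. 0 < z \<and> z < K \<and> mid_wronsk K d z = 0}"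
    "\<bar>(sqrt (\<xi>\<^sup>2 - k1\<^sup>2))\<^sup>2 - (sqrt (\<zeta>\<^sup>2 - k1\<^sup>2))\<^sup>2\<bar> = \<bar>\<xi>\<^sup>2 - \<zeta>\<^sup>2\<bar>"
    using z k \<xi> abs_less_square_iff[of k1 \<xi>] unfolding K_def by auto
next
  have k12: "k1\<^sup>2 < k2\<^sup>2" using k abs_less_square_iff[of k1 k2] by simp
  have zero_iff: "\<zeta> \<in> wzeros k1 k2 d \<longleftrightarrow> k1 < \<zeta> \<and> \<zeta> < k2 \<and> mid_wronsk K d (sqrt (\<zeta>\<^sup>2 - k1\<^sup>2)) = 0" for \<zeta>
    using wronsk_between_thresholds(5)[OF k d, of \<zeta>] k unfolding wzeros_def K_def by auto
  fix z assume "z \<in> {z. 0 < z \<and> z < K \<and> mid_wronsk K d z = 0}"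
  then have z: "0 < z" "z < K" "mid_wronsk K d z = 0" by auto
  then have "z\<^sup>2 < k2\<^sup>2 - k1\<^sup>2" using k12 unfolding K_def by (metis abs_less_square_iff abs_of_pos real_sqrt_abs real_sqrt_less_iff power2_less_imp_less)
  then have "k1 < sqrt (z\<^sup>2 + k1\<^sup>2)" "sqrt (z\<^sup>2 + k1\<^sup>2) < k2"
    using z k real_sqrt_less_mono[of "k1\<^sup>2" "z\<^sup>2 + k1\<^sup>2"] real_sqrt_less_mono[of "z\<^sup>2 + k1\<^sup>2" "k2\<^sup>2"] by auto
  then show "sqrt ((sqrt (z\<^sup>2 + k1\<^sup>2))\<^sup>2 - k1\<^sup>2) = z" "sqrt (z\<^sup>2 + k1\<^sup>2) \<in> wzeros k1 k2 d"
    using z unfolding zero_iff by simp_all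
qed

lemma between_factor_le:
  fixes B K d m T P C :: real
  assumes B: "0 < B" "B < K" and d: "0 < d" and m: "B\<^sup>2 + m\<^sup>2 = K\<^sup>2" and T: "T \<noteq> 0"
    and P: "0 \<le> P" "P \<le> (K\<^sup>2) ^ n"
    and CB: "B * P \<le> C * \<bar>T\<bar>" and CS: "\<bar>sin (2 * m * d) / m\<bar> * P \<le> C * \<bar>T\<bar>"
  shows "((1 + 2 * B * d)\<^sup>2 * exp (2 * B * d) / (2 * \<bar>T\<bar>)
          + (B\<^sup>2 + m\<^sup>2) * \<bar>sin (2 * m * d) / m\<bar> / (4 * B * \<bar>T\<bar>) + 1 / (2 * B)) * (B * P)
         \<le> (1 + 2 * K * d)\<^sup>2 * exp (2 * K * d) * C / 2 + K\<^sup>2 * C / 4 + (K\<^sup>2) ^ n / 2"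
proof -
  have T': "0 < \<bar>T\<bar>" using T by simp
  have "(1 + 2 * B * d)\<^sup>2 * exp (2 * B * d) \<le> (1 + 2 * K * d)\<^sup>2 * exp (2 * K * d)"
    using B d by (intro mult_mono power_mono) auto
  then have "(1 + 2 * B * d)\<^sup>2 * exp (2 * B * d) * (B * P) \<le> (1 + 2 * K * d)\<^sup>2 * exp (2 * K * d) * (C * \<bar>T\<bar>)"
    by (rule mult_mono[OF _ CB]) (use B P in auto)
  then have 1: "(1 + 2 * B * d)\<^sup>2 * exp (2 * B * d) / (2 * \<bar>T\<bar>) * (B * P) \<le> (1 + 2 * K * d)\<^sup>2 * exp (2 * K * d) * C / 2"
    using T' by (simp add: field_simps)
  have "(B\<^sup>2 + m\<^sup>2) * \<bar>sin (2 * m * d) / m\<bar> / (4 * B * \<bar>T\<bar>) * (B * P)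
      = K\<^sup>2 * (\<bar>sin (2 * m * d) / m\<bar> * P) / (4 * \<bar>T\<bar>)"
    unfolding m using B by (simp add: field_simps)
  also have "\<dots> \<le> K\<^sup>2 * (C * \<bar>T\<bar>) / (4 * \<bar>T\<bar>)" using CS by (intro divide_right_mono mult_left_mono) auto
  also have "\<dots> = K\<^sup>2 * C / 4" using T' by simp
  finally have 2: "(B\<^sup>2 + m\<^sup>2) * \<bar>sin (2 * m * d) / m\<bar> / (4 * B * \<bar>T\<bar>) * (B * P) \<le> K\<^sup>2 * C / 4" .
  have 3: "1 / (2 * B) * (B * P) \<le> (K\<^sup>2) ^ n / 2" using P B by simp
  show ?thesis using 1 2 3 unfolding distrib_right by linarith
qed

lemma resolv_bound_between:
  assumes k: "0 < k1" "k1 < k2" and d: "0 < d"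
  obtains C where "0 \<le> C"
    "\<And>\<xi> x y. k1 < \<bar>\<xi>\<bar> \<Longrightarrow> \<bar>\<xi>\<bar> < k2 \<Longrightarrow> \<bar>\<xi>\<bar> \<notin> wzeros k1 k2 d \<Longrightarrow> x \<noteq> y \<Longrightarrow>
       cmod (resolv k1 k2 d \<xi> x y) \<le> C * exp (- sqrt (\<xi>\<^sup>2 - k1\<^sup>2) * \<bar>x - y\<bar>) /
         (sqrt \<bar>\<xi>\<^sup>2 - k1\<^sup>2\<bar> * (\<Prod>\<zeta>\<in>wzeros k1 k2 d. \<bar>\<xi>\<^sup>2 - \<zeta>\<^sup>2\<bar>))"
proof -
  define K where "K = sqrt (k2\<^sup>2 - k1\<^sup>2)"
  define Z where "Z = {z. 0 < z \<and> z < K \<and> mid_wronsk K d z = 0}"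
  have K: "0 < K" "K\<^sup>2 = k2\<^sup>2 - k1\<^sup>2" unfolding K_def using k abs_less_square_iff[of k1 k2] by auto
  obtain Ck where Ck: "\<And>B. 0 < B \<Longrightarrow> B < K \<Longrightarrow>
      (B + \<bar>sin (2 * mid_freq K B * d) / mid_freq K B\<bar>) * (\<Prod>z\<in>Z. \<bar>B\<^sup>2 - z\<^sup>2\<bar>) \<le> Ck * \<bar>mid_wronsk K d B\<bar>"
    using mid_wronsk_product_le(2)[OF K(1) d] unfolding Z_def by blast
  define C where "C = (1 + 2 * K * d)\<^sup>2 * exp (2 * K * d) * \<bar>Ck\<bar> / 2 + K\<^sup>2 * \<bar>Ck\<bar> / 4 + (K\<^sup>2) ^ card Z / 2"
  show ?thesis
  proof
    show "0 \<le> C" unfolding C_def by simp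
    fix \<xi> x y :: real
    assume \<xi>: "k1 < \<bar>\<xi>\<bar>" "\<bar>\<xi>\<bar> < k2" and nz: "\<bar>\<xi>\<bar> \<notin> wzeros k1 k2 d" and xy: "x \<noteq> y"
    define B m where "B = sqrt (\<xi>\<^sup>2 - k1\<^sup>2)" and "m = mid_freq K B"
    note w = wronsk_between_thresholds[OF k d \<xi>, folded B_def K_def, folded m_def]
    have \<xi>': "k1 < \<bar>\<bar>\<xi>\<bar>\<bar>" "\<bar>\<bar>\<xi>\<bar>\<bar> < k2" using \<xi> by auto
    have T: "mid_wronsk K d B \<noteq> 0"
      using wronsk_between_thresholds(5)[OF k d \<xi>'] nz \<xi> unfolding wzeros_def B_def K_def by auto
    have m: "0 < m" "B\<^sup>2 + m\<^sup>2 = K\<^sup>2" unfolding m_def using mid_freq_pos[of B K] mid_freq_squared[of B K] w by auto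
    define P where "P = (\<Prod>z\<in>Z. \<bar>B\<^sup>2 - z\<^sup>2\<bar>)"
    have P_eq: "(\<Prod>\<zeta>\<in>wzeros k1 k2 d. \<bar>\<xi>\<^sup>2 - \<zeta>\<^sup>2\<bar>) = P"
      unfolding P_def Z_def B_def K_def by (rule prod_wzeros_eq[OF k d \<xi>])
    have "Z \<subseteq> {0<..<K}" unfolding Z_def by auto
    have "0 < \<bar>B\<^sup>2 - z\<^sup>2\<bar>" if "z \<in> Z" for z
    proof -
      have "z \<noteq> B" "0 < z" using that T unfolding Z_def by auto
      then show ?thesis using w(1) by (simp add: power2_eq_iff_nonneg)
    qed
    then have P: "0 < P" "P \<le> (K\<^sup>2) ^ card Z"
      using prod_abs_diff_squares_le(2)[OF \<open>Z \<subseteq> {0<..<K}\<close> w(1,2)] unfolding P_def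
      by (auto intro: prod_pos)
    have sq: "sqrt \<bar>\<xi>\<^sup>2 - k1\<^sup>2\<bar> = B" unfolding B_def using \<xi> k abs_less_square_iff[of k1 \<xi>] by simp
    define X where "X = (1 + 2 * B * d)\<^sup>2 * exp (2 * B * d) / (2 * \<bar>mid_wronsk K d B\<bar>)
      + (B\<^sup>2 + m\<^sup>2) * \<bar>sin (2 * m * d) / m\<bar> / (4 * B * \<bar>mid_wronsk K d B\<bar>) + 1 / (2 * B)"
    have "B * P \<le> \<bar>Ck\<bar> * \<bar>mid_wronsk K d B\<bar>" "\<bar>sin (2 * m * d) / m\<bar> * P \<le> \<bar>Ck\<bar> * \<bar>mid_wronsk K d B\<bar>"
      using Ck[OF w(1,2)] P w(1) abs_ge_self[of Ck] mult_right_mono[of Ck "\<bar>Ck\<bar>" "\<bar>mid_wronsk K d B\<bar>"]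
      unfolding P_def m_def by (smt (verit, best) distrib_right mult_nonneg_nonneg abs_ge_zero)+
    then have scaled: "X * (B * P) \<le> C"
      unfolding X_def C_def using between_factor_le[OF w(1,2) d m(2) T] P by simp
    have "cmod (resolv k1 k2 d \<xi> x y) \<le> exp (- B * (max x y - min x y)) * X"
      using norm_resolv_eq_jost_ratio[OF k d, of \<xi> x y] \<xi> k
        jost_ratio_imaginary_real_le[OF w(1) m(1) d, of "min x y" "max x y"] xy
      unfolding w(3,4) X_def mid_wronsk_eq[of B K d, folded m_def] using w T
      by (simp add: min_def max_def mid_wronsk_eq[of B K d, folded m_def])
    also have "\<dots> = exp (- B * (max x y - min x y)) * (X * (B * P)) / (B * P)" using P w by simp
    also have "\<dots> \<le> exp (- B * (max x y - min x y)) * C / (B * P)"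
      using scaled P w by (intro divide_right_mono mult_left_mono) auto
    finally show "cmod (resolv k1 k2 d \<xi> x y) \<le> C * exp (- sqrt (\<xi>\<^sup>2 - k1\<^sup>2) * \<bar>x - y\<bar>) /
         (sqrt \<bar>\<xi>\<^sup>2 - k1\<^sup>2\<bar> * (\<Prod>\<zeta>\<in>wzeros k1 k2 d. \<bar>\<xi>\<^sup>2 - \<zeta>\<^sup>2\<bar>))"
      unfolding sq P_eq B_def[symmetric] using xy by (simp add: mult_ac max_def min_def abs_if split: if_splits)
  qed
qed

lemma le_with_larger_constant:
  fixes R c C u v :: real
  shows "R \<le> c / u * v \<Longrightarrow> c \<le> C \<Longrightarrow> 0 \<le> u \<Longrightarrow> 0 \<le> v \<Longrightarrow> R \<le> C / u * v"
    and "R \<le> c * v / u \<Longrightarrow> c \<le> C \<Longrightarrow> 0 \<le> u \<Longrightarrow> 0 \<le> v \<Longrightarrow> R \<le> C * v / u"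
    and "R \<le> c / u \<Longrightarrow> c \<le> C \<Longrightarrow> 0 \<le> u \<Longrightarrow> R \<le> C / u"
  by (auto elim!: order_trans intro!: mult_right_mono divide_right_mono)

theorem theorem3:
  fixes k1 k2 d :: real
  assumes "0 < k1" and "k1 < k2" and "0 < d"
  shows "\<exists>C::real. \<forall>\<xi> x y.
     \<bar>\<xi>\<bar> \<noteq> k1 \<and> \<bar>\<xi>\<bar> \<noteq> k2 \<and> \<bar>\<xi>\<bar> \<notin> wzeros k1 k2 d \<and> x \<noteq> y \<longrightarrow>
     (let a = min x y; b = max x y;
          A = sqrt (\<xi>\<^sup>2 - k2\<^sup>2); B = sqrt (\<xi>\<^sup>2 - k1\<^sup>2);
          R = cmod (resolv k1 k2 d \<xi> x y) in
      (\<bar>\<xi>\<bar> > k2 \<longrightarrow>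
         ((b < -d \<or> d < a \<or> (a < -d \<and> d < b)) \<longrightarrow>
             R \<le> C / (1 + \<bar>\<xi>\<bar>) * exp (- B * \<bar>x - y\<bar>)) \<and>
         (\<not> (b < -d \<or> d < a \<or> (a < -d \<and> d < b)) \<longrightarrow>
             R \<le> C / (1 + \<bar>\<xi>\<bar>) * exp (- A * \<bar>x - y\<bar>))) \<and>
      (k1 < \<bar>\<xi>\<bar> \<and> \<bar>\<xi>\<bar> < k2 \<longrightarrow>
         R \<le> C * exp (- B * \<bar>x - y\<bar>) /
               (sqrt \<bar>\<xi>\<^sup>2 - k1\<^sup>2\<bar> * (\<Prod>\<zeta>\<in>wzeros k1 k2 d. \<bar>\<xi>\<^sup>2 - \<zeta>\<^sup>2\<bar>))) \<and>
      (\<bar>\<xi>\<bar> < k1 \<longrightarrow> R \<le> C / sqrt \<bar>\<xi>\<^sup>2 - k1\<^sup>2\<bar>))"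
proof -
  obtain Ca where "0 \<le> Ca" and above:
    "\<And>\<xi> x y. k2 < \<bar>\<xi>\<bar> \<Longrightarrow> x \<noteq> y \<Longrightarrow>
       cmod (resolv k1 k2 d \<xi> x y) \<le> Ca / (1 + \<bar>\<xi>\<bar>) * exp (- sqrt (\<xi>\<^sup>2 - k2\<^sup>2) * \<bar>x - y\<bar>)"
    and above_outer: "\<And>\<xi> x y. k2 < \<bar>\<xi>\<bar> \<Longrightarrow> x \<noteq> y \<Longrightarrow>
       max x y \<le> -d \<or> d \<le> min x y \<or> (min x y \<le> -d \<and> d \<le> max x y) \<Longrightarrow>
       cmod (resolv k1 k2 d \<xi> x y) \<le> Ca / (1 + \<bar>\<xi>\<bar>) * exp (- sqrt (\<xi>\<^sup>2 - k1\<^sup>2) * \<bar>x - y\<bar>)"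
    using resolv_bound_above_k2[OF assms] by blast
  obtain Cb where "0 \<le> Cb" and between:
    "\<And>\<xi> x y. k1 < \<bar>\<xi>\<bar> \<Longrightarrow> \<bar>\<xi>\<bar> < k2 \<Longrightarrow> \<bar>\<xi>\<bar> \<notin> wzeros k1 k2 d \<Longrightarrow> x \<noteq> y \<Longrightarrow>
       cmod (resolv k1 k2 d \<xi> x y) \<le> Cb * exp (- sqrt (\<xi>\<^sup>2 - k1\<^sup>2) * \<bar>x - y\<bar>) /
         (sqrt \<bar>\<xi>\<^sup>2 - k1\<^sup>2\<bar> * (\<Prod>\<zeta>\<in>wzeros k1 k2 d. \<bar>\<xi>\<^sup>2 - \<zeta>\<^sup>2\<bar>))"
    using resolv_bound_between[OF assms] by blast
  obtain Cc where "0 \<le> Cc" and below: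
    "\<And>\<xi> x y. \<bar>\<xi>\<bar> < k1 \<Longrightarrow> x \<noteq> y \<Longrightarrow> cmod (resolv k1 k2 d \<xi> x y) \<le> Cc / sqrt \<bar>\<xi>\<^sup>2 - k1\<^sup>2\<bar>"
    using resolv_bound_below_k1[OF assms] by blast
  let ?C = "Ca + Cb + Cc"
  have le: "Ca \<le> ?C" "Cb \<le> ?C" "Cc \<le> ?C" using \<open>0 \<le> Ca\<close> \<open>0 \<le> Cb\<close> \<open>0 \<le> Cc\<close> by auto
  show ?thesis
    unfolding Let_def
  proof (intro exI[of _ ?C] allI impI conjI)
    fix \<xi> x y :: real
    assume "\<bar>\<xi>\<bar> \<noteq> k1 \<and> \<bar>\<xi>\<bar> \<noteq> k2 \<and> \<bar>\<xi>\<bar> \<notin> wzeros k1 k2 d \<and> x \<noteq> y"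
    then have nz: "\<bar>\<xi>\<bar> \<notin> wzeros k1 k2 d" and xy: "x \<noteq> y" by auto
    show "cmod (resolv k1 k2 d \<xi> x y) \<le> ?C / (1 + \<bar>\<xi>\<bar>) * exp (- sqrt (\<xi>\<^sup>2 - k1\<^sup>2) * \<bar>x - y\<bar>)"
      if "k2 < \<bar>\<xi>\<bar>" "max x y < -d \<or> d < min x y \<or> (min x y < -d \<and> d < max x y)"
      using that by (intro le_with_larger_constant(1)[OF above_outer[OF that(1) xy] le(1)]) auto
    show "cmod (resolv k1 k2 d \<xi> x y) \<le> ?C / (1 + \<bar>\<xi>\<bar>) * exp (- sqrt (\<xi>\<^sup>2 - k2\<^sup>2) * \<bar>x - y\<bar>)"
      if "k2 < \<bar>\<xi>\<bar>"
      by (intro le_with_larger_constant(1)[OF above[OF that xy] le(1)]) auto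
    show "cmod (resolv k1 k2 d \<xi> x y) \<le> ?C * exp (- sqrt (\<xi>\<^sup>2 - k1\<^sup>2) * \<bar>x - y\<bar>) /
            (sqrt \<bar>\<xi>\<^sup>2 - k1\<^sup>2\<bar> * (\<Prod>\<zeta>\<in>wzeros k1 k2 d. \<bar>\<xi>\<^sup>2 - \<zeta>\<^sup>2\<bar>))"
      if "k1 < \<bar>\<xi>\<bar> \<and> \<bar>\<xi>\<bar> < k2"
      using that by (intro le_with_larger_constant(2)[OF between[OF _ _ nz xy] le(2)])
        (auto intro!: mult_nonneg_nonneg prod_nonneg)
    show "cmod (resolv k1 k2 d \<xi> x y) \<le> ?C / sqrt \<bar>\<xi>\<^sup>2 - k1\<^sup>2\<bar>" if "\<bar>\<xi>\<bar> < k1"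
      by (intro le_with_larger_constant(3)[OF below[OF that xy] le(3)]) auto
  qed
qed

end
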